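(* Let $\alpha>0$, $p>0$, $0<\ell<\infty$, and let $f$ be a non-negative measurable function on $(\ell,\infty)$. (a) If $p>1$, then $$\alpha^{p-1}\Big(\int_\ell^\infty f(x)dx\Big)^p+\alpha^p\int_\ell^\infty\Big[\log\frac{xe}{\ell}\Big]^{\alpha p-1}\Big(\int_x^\infty f(y)dy\Big)^p\frac{dx}{x}\le\int_\ell^\infty x^p\Big[\log\frac{xe}{\ell}\Big]^{(1+\alpha)p-1}f^p(x)\frac{dx}{x},$$ and both constants $\alpha^{p-1}$ and $\alpha^p$ are sharp. (b) If $0<p\le1$, the inequality holds in the reversed direction and both constants $\alpha^{p-1}$ and $\alpha^p$ are sharp. *)

theory Defs
  imports "HOL-Analysis.Analysis"
begin

definition epowr :: "ennreal \<Rightarrow> real \<Rightarrow> ennreal" where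
  "epowr a r = (if a = \<infinity> then \<infinity> else ennreal (enn2real a powr r))"

definition admissible :: "real \<Rightarrow> (real \<Rightarrow> real) \<Rightarrow> bool" where
  "admissible l f \<longleftrightarrow> set_borel_measurable lebesgue {l<..} f \<and> (\<forall>x>l. 0 \<le> f x)"

definition hardy_lhs :: "real \<Rightarrow> real \<Rightarrow> real \<Rightarrow> real \<Rightarrow> real \<Rightarrow> (real \<Rightarrow> real) \<Rightarrow> ennreal" where
  "hardy_lhs c1 c2 \<alpha> p l f =
     ennreal c1 * epowr (\<integral>\<^sup>+ x\<in>{l<..}. ennreal (f x) \<partial>lebesgue) p
   + ennreal c2 * (\<integral>\<^sup>+ x\<in>{l<..}. ennreal (ln (x * exp 1 / l) powr (\<alpha> * p - 1) / x)
         * epowr (\<integral>\<^sup>+ y\<in>{x<..}. ennreal (f y) \<partial>lebesgue) p \<partial>lebesgue)"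

definition hardy_rhs :: "real \<Rightarrow> real \<Rightarrow> real \<Rightarrow> (real \<Rightarrow> real) \<Rightarrow> ennreal" where
  "hardy_rhs \<alpha> p l f =
     (\<integral>\<^sup>+ x\<in>{l<..}. ennreal (x powr p * ln (x * exp 1 / l) powr ((1 + \<alpha>) * p - 1)
         * f x powr p / x) \<partial>lebesgue)"

end

theory Submission
  imports Defs
begin

text \<open>
  Let \<open>G(x)\<close> be the integral of \<open>f\<close> over \<open>(x,\<infinity>)\<close>, \<open>L(x) = ln (x e / \<ell>)\<close>, \<open>R\<close> the right-hand side,
  \<open>J\<close> the integral of \<open>L\<^sup>\<alpha>\<^sup>p\<^sup>-\<^sup>1 G\<^sup>p / x\<close> and \<open>M\<close> the integral of \<open>p L\<^sup>\<alpha>\<^sup>p G\<^sup>p\<^sup>-\<^sup>1 f\<close>, all over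
  \<open>(\<ell>,\<infinity>)\<close>. Since \<open>-(G\<^sup>p)' = p G\<^sup>p\<^sup>-\<^sup>1 f\<close>, \<open>(L\<^sup>\<alpha>\<^sup>p)' = \<alpha> p L\<^sup>\<alpha>\<^sup>p\<^sup>-\<^sup>1 / x\<close> and \<open>L(\<ell>) = 1\<close>,
  integration by parts gives \<open>M = G(\<ell>)\<^sup>p + \<alpha> p J\<close>. For \<open>p > 1\<close>, Young's inequality applied to the
  integrand of \<open>M\<close> gives \<open>M \<le> (p - 1) \<alpha> J + \<alpha>\<^sup>1\<^sup>-\<^sup>p R\<close>; cancelling \<open>(p - 1) \<alpha> J\<close>, which is finite
  once \<open>f\<close> is truncated, leaves \<open>\<alpha>\<^sup>p\<^sup>-\<^sup>1 G(\<ell>)\<^sup>p + \<alpha>\<^sup>p J \<le> R\<close>. For \<open>p \<le> 1\<close> the weighted AM-GM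
  inequality runs the other way, \<open>R \<le> \<alpha>\<^sup>p\<^sup>-\<^sup>1 M + (1 - p) \<alpha>\<^sup>p J\<close>, and the same identity gives the
  reverse inequality. The constants are approached by \<open>f = \<beta> L\<^sup>-\<^sup>\<beta>\<^sup>-\<^sup>1 / x\<close> as \<open>\<beta>\<close> decreases to
  \<open>\<alpha>\<close>: then \<open>G = L\<^sup>-\<^sup>\<beta>\<close> and both sides are explicit multiples of \<open>1 / (\<beta> - \<alpha>)\<close>.
\<close>

lemma nn_integral_FTC_einterval:
  fixes f F :: "real \<Rightarrow> real" and a b :: ereal
  assumes "a < b"
  assumes F: "\<And>x. a < ereal x \<Longrightarrow> ereal x < b \<Longrightarrow> DERIV F x :> f x"
  assumes f: "\<And>x. a < ereal x \<Longrightarrow> ereal x < b \<Longrightarrow> isCont f x"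
  assumes nn: "\<And>x. a < ereal x \<Longrightarrow> ereal x < b \<Longrightarrow> 0 \<le> f x"
  assumes A: "((F \<circ> real_of_ereal) \<longlongrightarrow> A) (at_right a)"
  assumes B: "((F \<circ> real_of_ereal) \<longlongrightarrow> B) (at_left b)"
  shows "(\<integral>\<^sup>+x\<in>einterval a b. ennreal (f x) \<partial>lborel) = ennreal (B - A)"
proof -
  have int: "set_integrable lborel (einterval a b) f" and eq: "(LBINT x=a..b. f x) = B - A"
    using interval_integral_FTC_nonneg[OF assms(1) F f _ A B] nn by auto
  have "(\<integral>\<^sup>+x\<in>einterval a b. ennreal (f x) \<partial>lborel)
      = ennreal (\<integral>x. indicator (einterval a b) x * f x \<partial>lborel)"
    using int nn unfolding set_integrable_def
    by (subst nn_integral_eq_integral[symmetric])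
       (auto split: split_indicator simp: einterval_iff intro!: nn_integral_cong)
  also have "(\<integral>x. indicator (einterval a b) x * f x \<partial>lborel) = B - A"
    using eq assms(1)
    unfolding interval_lebesgue_integral_def set_lebesgue_integral_def by (simp add: less_imp_le)
  finally show ?thesis .
qed

lemma nn_integral_FTC_Ioo:
  fixes f F :: "real \<Rightarrow> real"
  assumes "a < b"
  assumes "\<And>x. a < x \<Longrightarrow> x < b \<Longrightarrow> DERIV F x :> f x"
    and "\<And>x. a < x \<Longrightarrow> x < b \<Longrightarrow> isCont f x"
    and "\<And>x. a < x \<Longrightarrow> x < b \<Longrightarrow> 0 \<le> f x"
    and "(F \<longlongrightarrow> A) (at_right a)" and "(F \<longlongrightarrow> B) (at_left b)"
  shows "(\<integral>\<^sup>+x\<in>{a<..<b}. ennreal (f x) \<partial>lborel) = ennreal (B - A)"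
  using nn_integral_FTC_einterval[of "ereal a" "ereal b" F f A B] assms
  by (simp add: ereal_tendsto_simps)

lemma nn_integral_FTC_Ioi:
  fixes f F :: "real \<Rightarrow> real"
  assumes "\<And>x. a < x \<Longrightarrow> DERIV F x :> f x"
    and "\<And>x. a < x \<Longrightarrow> isCont f x"
    and "\<And>x. a < x \<Longrightarrow> 0 \<le> f x"
    and "(F \<longlongrightarrow> A) (at_right a)" and "(F \<longlongrightarrow> B) at_top"
  shows "(\<integral>\<^sup>+x\<in>{a<..}. ennreal (f x) \<partial>lborel) = ennreal (B - A)"
  using nn_integral_FTC_einterval[of "ereal a" "\<infinity>" F f A B] assms
  by (simp add: ereal_tendsto_simps)

lemma nn_integral_powr_Ioo:
  fixes r g :: real
  assumes "0 < r" "0 < g"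
  shows "(\<integral>\<^sup>+u\<in>{0<..<g}. ennreal (r * u powr (r - 1)) \<partial>lborel) = ennreal (g powr r)"
proof -
  have "(\<integral>\<^sup>+u\<in>{0<..<g}. ennreal (r * u powr (r - 1)) \<partial>lborel) = ennreal (g powr r - 0)"
  proof (rule nn_integral_FTC_Ioo[where F="\<lambda>u. u powr r"])
    show "((\<lambda>u. u powr r) \<longlongrightarrow> 0) (at_right 0)"
      using assms by (intro tendsto_zero_powrI) (auto simp: eventually_at_right_less eventually_at_filter)
  qed (use assms in \<open>auto intro!: derivative_eq_intros continuous_intros tendsto_intros\<close>)
  then show ?thesis by simp
qed

lemma nn_integral_powr_Ioi:
  fixes r v :: real
  assumes "r < 0" "0 < v"
  shows "(\<integral>\<^sup>+u\<in>{v<..}. ennreal (- r * u powr (r - 1)) \<partial>lborel) = ennreal (v powr r)"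
proof -
  have "(\<integral>\<^sup>+u\<in>{v<..}. ennreal (- r * u powr (r - 1)) \<partial>lborel) = ennreal (0 - (- (v powr r)))"
  proof (rule nn_integral_FTC_Ioi[where F="\<lambda>u. - (u powr r)"])
    show "((\<lambda>u. - (u powr r)) \<longlongrightarrow> 0) at_top"
      using tendsto_minus[OF tendsto_neg_powr[OF assms(1) filterlim_ident]] by simp
  qed (use assms in \<open>auto intro!: derivative_eq_intros continuous_intros tendsto_intros
                          simp: mult_nonpos_nonneg\<close>)
  then show ?thesis by simp
qed

lemma nn_integral_swap_pred:
  fixes w \<phi> :: "real \<Rightarrow> ennreal"
  assumes [measurable]: "w \<in> borel_measurable borel" "\<phi> \<in> borel_measurable borel"
    "U \<in> sets borel" "S \<in> sets borel" "Measurable.pred (borel \<Otimes>\<^sub>M borel) (\<lambda>(u, s). Q u s)"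
  shows "(\<integral>\<^sup>+u\<in>U. w u * (\<integral>\<^sup>+s\<in>{s\<in>S. Q u s}. \<phi> s \<partial>lborel) \<partial>lborel)
       = (\<integral>\<^sup>+s\<in>S. \<phi> s * (\<integral>\<^sup>+u\<in>{u\<in>U. Q u s}. w u \<partial>lborel) \<partial>lborel)"
proof -
  have [measurable]: "Measurable.pred (borel \<Otimes>\<^sub>M borel) (\<lambda>x. Q (fst x) (snd x))"
    using assms(5) by (simp add: case_prod_beta')
  have "(\<integral>\<^sup>+u\<in>U. w u * (\<integral>\<^sup>+s\<in>{s\<in>S. Q u s}. \<phi> s \<partial>lborel) \<partial>lborel)
      = (\<integral>\<^sup>+u. \<integral>\<^sup>+s. w u * \<phi> s * indicator {(u, s). u \<in> U \<and> s \<in> S \<and> Q u s} (u, s) \<partial>lborel \<partial>lborel)"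
    by (intro nn_integral_cong, subst nn_integral_cmult[symmetric])
       (auto intro!: nn_integral_cong split: split_indicator simp: mult_ac)
  also have "\<dots> = (\<integral>\<^sup>+s. \<integral>\<^sup>+u. w u * \<phi> s * indicator {(u, s). u \<in> U \<and> s \<in> S \<and> Q u s} (u, s) \<partial>lborel \<partial>lborel)"
    by (rule lborel_pair.Fubini'[symmetric]) measurable
  also have "\<dots> = (\<integral>\<^sup>+s\<in>S. \<phi> s * (\<integral>\<^sup>+u\<in>{u\<in>U. Q u s}. w u \<partial>lborel) \<partial>lborel)"
    by (intro nn_integral_cong, subst nn_integral_cmult[symmetric])
       (auto intro!: nn_integral_cong split: split_indicator simp: mult_ac)
  finally show ?thesis .
qed

section \<open>Tail integrals\<close>

definition tail_integral :: "(real \<Rightarrow> real) \<Rightarrow> real \<Rightarrow> ennreal" where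
  "tail_integral h x = (\<integral>\<^sup>+y\<in>{x<..}. ennreal (h y) \<partial>lborel)"

lemma tail_integral_antimono: "x \<le> y \<Longrightarrow> tail_integral h y \<le> tail_integral h x"
  unfolding tail_integral_def by (intro nn_integral_mono) (auto split: split_indicator)

lemma borel_measurable_tail_integral[measurable]:
  assumes [measurable]: "h \<in> borel_measurable borel"
  shows "tail_integral h \<in> borel_measurable borel"
proof -
  have [measurable]: "Measurable.pred (borel \<Otimes>\<^sub>M borel) (\<lambda>x::real \<times> real. snd x \<in> {fst x<..})"
    unfolding greaterThan_iff by measurable
  have "(\<lambda>x. \<integral>\<^sup>+y. ennreal (h y) * indicator {x<..} y \<partial>lborel) \<in> borel_measurable borel"
    by measurable
  then show ?thesis unfolding tail_integral_def by simp
qed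

lemma tail_integral_finite:
  assumes "tail_integral h x < \<infinity>" "x \<le> s"
  shows "tail_integral h s = ennreal (enn2real (tail_integral h s))"
    and "enn2real (tail_integral h s) \<le> enn2real (tail_integral h x)"
  using assms tail_integral_antimono[OF assms(2), of h]
  by (auto simp: le_less_trans less_top intro!: enn2real_mono)

lemma tail_integral_right_continuous:
  assumes [measurable]: "h \<in> borel_measurable borel"
  shows "tail_integral h t = (SUP n. tail_integral h (t + 1 / Suc n))"
proof -
  have "ennreal (h y) * indicator {t<..} y = (SUP n. ennreal (h y) * indicator {t + 1 / Suc n<..} y)"
    for y
  proof (cases "t < y")
    case True
    then obtain n where n: "1 / Suc n < y - t"
      using nat_approx_posE[of "y - t"] by auto
    have "t + 1 / Suc m < y \<longrightarrow> t < y" for m :: nat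
      by (smt (verit) of_nat_0_le_iff divide_nonneg_nonneg)
    then show ?thesis
      using n True by (intro antisym SUP_upper2[of n] SUP_least) (auto split: split_indicator)
  next
    case False
    then have "\<not> t + 1 / Suc n < y" for n :: nat
      by (smt (verit) of_nat_0_le_iff divide_nonneg_nonneg)
    with False show ?thesis by simp
  qed
  then have "tail_integral h t
      = (\<integral>\<^sup>+y. (SUP n. ennreal (h y) * indicator {t + 1 / Suc n<..} y) \<partial>lborel)"
    unfolding tail_integral_def by (intro nn_integral_cong) simp
  also have "\<dots> = (SUP n. tail_integral h (t + 1 / Suc n))"
    unfolding tail_integral_def
  proof (rule nn_integral_monotone_convergence_SUP)
    show "incseq (\<lambda>n y. ennreal (h y) * indicator {t + 1 / Suc n<..} y)"
    proof (intro incseq_SucI le_funI)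
      fix n y
      have "t + 1 / Suc (Suc n) \<le> t + 1 / Suc n"
        by (simp add: frac_le)
      then show "ennreal (h y) * indicator {t + 1 / Suc n<..} y
          \<le> ennreal (h y) * indicator {t + 1 / Suc (Suc n)<..} y"
        by (auto split: split_indicator)
    qed
  qed measurable
  finally show ?thesis .
qed

text \<open>\<open>T\<close> lies in \<open>[Inf T, \<infinity>)\<close>, and the tail integral is right continuous at \<open>Inf T\<close>.\<close>

lemma set_nn_integral_le_tail_bound:
  assumes [measurable]: "h \<in> borel_measurable borel" "T \<in> sets borel"
    and "bdd_below T"
    and le: "\<And>s. s \<in> T \<Longrightarrow> tail_integral h s \<le> u"
  shows "(\<integral>\<^sup>+y\<in>T. ennreal (h y) \<partial>lborel) \<le> u"
proof (cases "T = {}")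
  case False
  define t0 where "t0 = Inf T"
  have "T \<subseteq> {t0..}"
    using \<open>bdd_below T\<close> by (auto simp: t0_def intro: cInf_lower)
  then have "(\<integral>\<^sup>+y\<in>T. ennreal (h y) \<partial>lborel) \<le> (\<integral>\<^sup>+y\<in>{t0..}. ennreal (h y) \<partial>lborel)"
    by (intro nn_integral_mono) (auto split: split_indicator)
  also have "\<dots> = tail_integral h t0"
    unfolding tail_integral_def
    by (intro nn_integral_cong_AE, use AE_lborel_singleton[of t0] in eventually_elim)
       (auto split: split_indicator)
  also have "\<dots> = (SUP n. tail_integral h (t0 + 1 / Suc n))"
    by (rule tail_integral_right_continuous) simp
  also have "\<dots> \<le> u"
  proof (rule SUP_least)
    fix n :: nat
    obtain s where "s \<in> T" "s < t0 + 1 / Suc n"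
      using False unfolding t0_def by (metis cInf_lessD less_add_same_cancel1 of_nat_0_less_iff
          zero_less_Suc zero_less_divide_1_iff)
    then show "tail_integral h (t0 + 1 / Suc n) \<le> u"
      using le tail_integral_antimono[of s "t0 + 1 / Suc n" h] by (auto intro: order_trans)
  qed
  finally show ?thesis .
qed simp

lemma tail_integral_superlevel_ge:
  assumes [measurable]: "h \<in> borel_measurable borel"
    and fin: "tail_integral h x < \<infinity>" and "0 \<le> u"
  shows "ennreal (enn2real (tail_integral h x) - u)
           \<le> (\<integral>\<^sup>+s\<in>{s. x < s \<and> u < enn2real (tail_integral h s)}. ennreal (h s) \<partial>lborel)"
proof -
  define G where "G s = enn2real (tail_integral h s)" for s
  define T where "T = {s. x < s \<and> G s \<le> u}"
  have [measurable]: "T \<in> sets borel"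
    unfolding T_def G_def by measurable
  have "tail_integral h x = (\<integral>\<^sup>+s. ennreal (h s) * indicator {s. x < s \<and> u < G s} s
                                   + ennreal (h s) * indicator T s \<partial>lborel)"
    unfolding tail_integral_def T_def by (intro nn_integral_cong) (auto split: split_indicator)
  also have "\<dots> = (\<integral>\<^sup>+s\<in>{s. x < s \<and> u < G s}. ennreal (h s) \<partial>lborel)
                 + (\<integral>\<^sup>+s\<in>T. ennreal (h s) \<partial>lborel)"
    unfolding G_def by (subst nn_integral_add) auto
  also have "(\<integral>\<^sup>+s\<in>T. ennreal (h s) \<partial>lborel) \<le> ennreal u"
  proof (rule set_nn_integral_le_tail_bound)
    show "bdd_below T"
      unfolding T_def by (auto intro!: bdd_belowI[of _ x])
    show "tail_integral h s \<le> ennreal u" if "s \<in> T" for s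
      using that tail_integral_finite(1)[OF fin, of s] unfolding T_def G_def
      by (metis (mono_tags, lifting) ennreal_leI less_imp_le mem_Collect_eq)
  qed measurable
  finally have "ennreal (G x) \<le> (\<integral>\<^sup>+s\<in>{s. x < s \<and> u < G s}. ennreal (h s) \<partial>lborel) + ennreal u"
    using tail_integral_finite(1)[OF fin order_refl] unfolding G_def by (simp add: add_left_mono)
  then show ?thesis
    using \<open>0 \<le> u\<close> unfolding G_def
    by (simp add: ennreal_minus[symmetric] ennreal_minus_le_iff add.commute)
qed

lemma tail_integral_sublevel_le:
  assumes [measurable]: "h \<in> borel_measurable borel"
    and fin: "tail_integral h x < \<infinity>"
  shows "(\<integral>\<^sup>+s\<in>{s. x < s \<and> enn2real (tail_integral h s) < u}. ennreal (h s) \<partial>lborel)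
           \<le> ennreal (min u (enn2real (tail_integral h x)))"
proof -
  define T where "T = {s. x < s \<and> enn2real (tail_integral h s) < u}"
  have [measurable]: "T \<in> sets borel"
    unfolding T_def by measurable
  have "(\<integral>\<^sup>+s\<in>T. ennreal (h s) \<partial>lborel) \<le> ennreal u"
  proof (rule set_nn_integral_le_tail_bound)
    show "bdd_below T"
      unfolding T_def by (auto intro!: bdd_belowI[of _ x])
    show "tail_integral h s \<le> ennreal u" if "s \<in> T" for s
      using that tail_integral_finite(1)[OF fin, of s] unfolding T_def
      by (metis (mono_tags, lifting) ennreal_leI less_imp_le mem_Collect_eq)
  qed measurable
  moreover have "(\<integral>\<^sup>+s\<in>T. ennreal (h s) \<partial>lborel) \<le> tail_integral h x"
    unfolding tail_integral_def T_def by (intro nn_integral_mono) (auto split: split_indicator)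
  ultimately show ?thesis
    using tail_integral_finite(1)[OF fin order_refl] unfolding T_def
    by (cases "u \<le> enn2real (tail_integral h x)") (auto simp: min_def)
qed

section \<open>Layer-cake estimates for powers of the tail integral\<close>

text \<open>The chain rule \<open>G(x)\<^sup>p = \<integral> p G\<^sup>p\<^sup>-\<^sup>1 h\<close> over \<open>(x,\<infinity>)\<close> is only needed as an inequality, in
  opposite directions for \<open>p > 1\<close> and \<open>p \<le> 1\<close>. Each direction follows by writing the power as an
  integral over levels \<open>u\<close> and bounding the mass of \<open>h\<close> on the level sets of \<open>G\<close>; no absolute
  continuity of \<open>G\<close> is needed.\<close>

lemma nn_integral_layer_powr_gt_1:
  fixes p g :: real
  assumes p: "1 < p" and g: "0 < g"
  shows "(\<integral>\<^sup>+u\<in>{0<..<g}. ennreal (p * (p - 1) * u powr (p - 2) * (g - u)) \<partial>lborel)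
       = ennreal (g powr p)"
proof -
  define F where "F u = p * g * u powr (p - 1) - (p - 1) * u powr p" for u
  have "DERIV F u :> p * (p - 1) * u powr (p - 2) * (g - u)" if "0 < u" for u
  proof -
    have "u powr (p - 1) = u powr (p - 2) * u"
      using powr_mult_base[of u "p - 2"] that by (simp add: mult.commute)
    moreover have "DERIV F u :> p * g * ((p - 1) * u powr (p - 1 - 1)) - (p - 1) * (p * u powr (p - 1))"
      unfolding F_def using that by (auto intro!: derivative_eq_intros)
    ultimately show ?thesis
      by (simp add: algebra_simps)
  qed
  moreover have "(F \<longlongrightarrow> p * g * 0 - (p - 1) * 0) (at_right 0)"
    unfolding F_def using p
    by (intro tendsto_intros tendsto_zero_powrI) (auto simp: eventually_at_right_less eventually_at_filter)
  moreover have "(F \<longlongrightarrow> F g) (at_left g)"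
    unfolding F_def using g by (intro tendsto_intros) auto
  moreover have "F g = g powr p"
    unfolding F_def using g by (simp add: powr_diff field_simps)
  ultimately have "(\<integral>\<^sup>+u\<in>{0<..<g}. ennreal (p * (p - 1) * u powr (p - 2) * (g - u)) \<partial>lborel)
      = ennreal (g powr p - 0)"
    using p g by (intro nn_integral_FTC_Ioo) (auto intro!: continuous_intros)
  then show ?thesis by simp
qed

lemma nn_integral_layer_powr_lt_1:
  fixes p g :: real
  assumes p: "0 < p" "p < 1" and g: "0 < g"
  shows "(\<integral>\<^sup>+u\<in>{0<..}. ennreal (p * (1 - p) * u powr (p - 2) * min u g) \<partial>lborel)
       = ennreal (g powr p)"
proof -
  define F where "F u = ennreal (p * (1 - p) * u powr (p - 2) * min u g)" for u
  have below: "(\<integral>\<^sup>+u\<in>{0<..<g}. F u \<partial>lborel) = ennreal ((1 - p) * g powr p)"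
  proof -
    have "u powr (p - 2) * u = u powr (p - 1)" if "0 < u" for u
      using powr_mult_base[of u "p - 2"] that by (simp add: mult.commute)
    then have "(\<integral>\<^sup>+u\<in>{0<..<g}. F u \<partial>lborel)
        = ennreal (1 - p) * (\<integral>\<^sup>+u\<in>{0<..<g}. ennreal (p * u powr (p - 1)) \<partial>lborel)"
      unfolding F_def using p
      by (subst nn_integral_cmult[symmetric])
         (auto intro!: nn_integral_cong split: split_indicator simp: ennreal_mult'[symmetric] mult_ac)
    then show ?thesis
      using nn_integral_powr_Ioo[OF p(1) g] p by (simp add: ennreal_mult')
  qed
  have above: "(\<integral>\<^sup>+u\<in>{g<..}. F u \<partial>lborel) = ennreal (p * g powr p)"
  proof -
    have "(\<integral>\<^sup>+u\<in>{g<..}. F u \<partial>lborel)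
        = ennreal (p * g) * (\<integral>\<^sup>+u\<in>{g<..}. ennreal (- (p - 1) * u powr (p - 1 - 1)) \<partial>lborel)"
      unfolding F_def using p g
      by (subst nn_integral_cmult[symmetric])
         (auto intro!: nn_integral_cong split: split_indicator simp: ennreal_mult'[symmetric] mult_ac)
    also have "\<dots> = ennreal (p * g * g powr (p - 1))"
      using nn_integral_powr_Ioi[of "p - 1" g] p g by (simp add: ennreal_mult')
    also have "p * g * g powr (p - 1) = p * g powr p"
      using g by (simp add: powr_diff)
    finally show ?thesis .
  qed
  have "(\<integral>\<^sup>+u\<in>{0<..}. F u \<partial>lborel)
      = (\<integral>\<^sup>+u. F u * indicator {0<..<g} u + F u * indicator {g<..} u \<partial>lborel)"
    using g by (intro nn_integral_cong_AE, use AE_lborel_singleton[of g] in eventually_elim)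
       (auto split: split_indicator)
  also have "\<dots> = ennreal ((1 - p) * g powr p) + ennreal (p * g powr p)"
    unfolding below[symmetric] above[symmetric] F_def by (intro nn_integral_add) auto
  also have "\<dots> = ennreal ((1 - p) * g powr p + p * g powr p)"
    using p by (intro ennreal_plus[symmetric]) auto
  also have "(1 - p) * g powr p + p * g powr p = g powr p"
    by (simp add: algebra_simps)
  finally show ?thesis
    unfolding F_def .
qed

lemma nn_integral_powr_level_Ioo:
  fixes p t g :: real
  assumes "1 < p" "0 \<le> t" "t \<le> g"
  shows "(\<integral>\<^sup>+u\<in>{u\<in>{0<..<g}. u < t}. ennreal (p * (p - 1) * u powr (p - 2)) \<partial>lborel)
       = ennreal (p * t powr (p - 1))"
proof (cases "t = 0")
  case False
  have "{u\<in>{0<..<g}. u < t} = {0<..<t}"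
    using assms by auto
  then have "(\<integral>\<^sup>+u\<in>{u\<in>{0<..<g}. u < t}. ennreal (p * (p - 1) * u powr (p - 2)) \<partial>lborel)
      = ennreal p * (\<integral>\<^sup>+u\<in>{0<..<t}. ennreal ((p - 1) * u powr (p - 1 - 1)) \<partial>lborel)"
    using assms
    by (subst nn_integral_cmult[symmetric]) (auto intro!: nn_integral_cong simp: ennreal_mult' mult.assoc)
  then show ?thesis
    using nn_integral_powr_Ioo[of "p - 1" t] False assms by (simp add: ennreal_mult')
qed simp

lemma nn_integral_powr_level_Ioi:
  fixes p t :: real
  assumes "p < 1" "0 < p" "0 < t"
  shows "(\<integral>\<^sup>+u\<in>{u\<in>{0<..}. t < u}. ennreal (p * (1 - p) * u powr (p - 2)) \<partial>lborel)
       = ennreal (p * t powr (p - 1))"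
proof -
  have "{u\<in>{0<..}. t < u} = {t<..}"
    using assms by auto
  then have "(\<integral>\<^sup>+u\<in>{u\<in>{0<..}. t < u}. ennreal (p * (1 - p) * u powr (p - 2)) \<partial>lborel)
      = ennreal p * (\<integral>\<^sup>+u\<in>{t<..}. ennreal (- (p - 1) * u powr (p - 1 - 1)) \<partial>lborel)"
    using assms
    by (subst nn_integral_cmult[symmetric]) (auto intro!: nn_integral_cong simp: ennreal_mult' mult.assoc)
  then show ?thesis
    using nn_integral_powr_Ioi[of "p - 1" t] assms by (simp add: ennreal_mult')
qed

lemma tail_integral_powr_le:
  assumes [measurable]: "h \<in> borel_measurable borel" and h: "\<And>x. 0 \<le> h x"
    and fin: "tail_integral h x < \<infinity>" and p: "1 < p"
  shows "ennreal (enn2real (tail_integral h x) powr p)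
           \<le> (\<integral>\<^sup>+s\<in>{x<..}. ennreal (p * enn2real (tail_integral h s) powr (p - 1) * h s) \<partial>lborel)"
proof -
  define G where "G s = enn2real (tail_integral h s)" for s
  have [measurable]: "G \<in> borel_measurable borel"
    unfolding G_def by measurable
  define w where "w u = ennreal (p * (p - 1) * u powr (p - 2))" for u
  have G_nonneg: "0 \<le> G s" for s
    unfolding G_def by simp
  have inner: "(\<integral>\<^sup>+u\<in>{u\<in>{0<..<G x}. u < G s}. w u \<partial>lborel) = ennreal (p * G s powr (p - 1))"
    if "x < s" for s
    unfolding w_def using tail_integral_finite(2)[OF fin less_imp_le[OF that]] G_nonneg[of s] p
    by (intro nn_integral_powr_level_Ioo) (auto simp: G_def)
  consider "G x = 0" | "0 < G x"
    using G_nonneg[of x] by fastforce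
  then show ?thesis
  proof cases
    case pos: 2
    have "ennreal (G x powr p) = (\<integral>\<^sup>+u\<in>{0<..<G x}. w u * ennreal (G x - u) \<partial>lborel)"
      unfolding w_def nn_integral_layer_powr_gt_1[OF p pos, symmetric] using p
      by (intro nn_integral_cong) (auto split: split_indicator simp: ennreal_mult'[symmetric])
    also have "\<dots> \<le> (\<integral>\<^sup>+u\<in>{0<..<G x}. w u * (\<integral>\<^sup>+s\<in>{s\<in>{x<..}. u < G s}. ennreal (h s) \<partial>lborel) \<partial>lborel)"
      using tail_integral_superlevel_ge[OF _ fin] unfolding G_def
      by (intro nn_integral_mono) (auto split: split_indicator intro!: mult_left_mono)
    also have "\<dots> = (\<integral>\<^sup>+s\<in>{x<..}. ennreal (h s) * (\<integral>\<^sup>+u\<in>{u\<in>{0<..<G x}. u < G s}. w u \<partial>lborel) \<partial>lborel)"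
      unfolding w_def by (rule nn_integral_swap_pred) measurable
    also have "\<dots> = (\<integral>\<^sup>+s\<in>{x<..}. ennreal (p * G s powr (p - 1) * h s) \<partial>lborel)"
    proof (intro nn_integral_cong)
      fix s
      have "ennreal (h s) * ennreal (p * G s powr (p - 1)) = ennreal (p * G s powr (p - 1) * h s)"
        using h[of s] p by (simp add: ennreal_mult[symmetric] mult_ac)
      then show "ennreal (h s) * (\<integral>\<^sup>+u\<in>{u\<in>{0<..<G x}. u < G s}. w u \<partial>lborel) * indicator {x<..} s
          = ennreal (p * G s powr (p - 1) * h s) * indicator {x<..} s"
        by (cases "x < s") (simp_all only: inner, simp_all)
    qed
    finally show ?thesis
      unfolding G_def .
  qed (simp add: G_def)
qed

lemma tail_integral_powr_ge:
  assumes [measurable]: "h \<in> borel_measurable borel" and h: "\<And>x. 0 \<le> h x"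
    and fin: "tail_integral h x < \<infinity>" and p: "0 < p" "p \<le> 1"
  shows "(\<integral>\<^sup>+s\<in>{x<..}. ennreal (p * enn2real (tail_integral h s) powr (p - 1) * h s) \<partial>lborel)
           \<le> ennreal (enn2real (tail_integral h x) powr p)"
proof -
  define G where "G s = enn2real (tail_integral h s)" for s
  have [measurable]: "G \<in> borel_measurable borel"
    unfolding G_def by measurable
  define w where "w u = ennreal (p * (1 - p) * u powr (p - 2))" for u
  have G_nonneg: "0 \<le> G s" for s
    unfolding G_def by simp
  consider "p = 1" | "G x = 0" | "p < 1" "0 < G x"
    using p G_nonneg[of x] by fastforce
  then show ?thesis
  proof cases
    case 1
    have "(\<integral>\<^sup>+s\<in>{x<..}. ennreal (p * G s powr (p - 1) * h s) \<partial>lborel) \<le> tail_integral h x"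
      unfolding tail_integral_def using 1 h
      by (intro nn_integral_mono) (auto split: split_indicator)
    then show ?thesis
      using 1 tail_integral_finite(1)[OF fin order_refl] unfolding G_def by simp
  next
    case 2
    then have "G s = 0" if "x < s" for s
      using tail_integral_finite(2)[OF fin, of s] that G_nonneg[of s] unfolding G_def by force
    then show ?thesis
      by (subst nn_integral_0_iff_AE[THEN iffD2]) (auto simp: G_def split: split_indicator)
  next
    case 3
    have inner: "ennreal (p * G s powr (p - 1)) \<le> (\<integral>\<^sup>+u\<in>{u\<in>{0<..}. G s < u}. w u \<partial>lborel)" for s
      unfolding w_def using nn_integral_powr_level_Ioi[OF 3(1) p(1), of "G s"] G_nonneg[of s]
      by (cases "G s = 0") auto
    have "(\<integral>\<^sup>+s\<in>{x<..}. ennreal (p * G s powr (p - 1) * h s) \<partial>lborel)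
        \<le> (\<integral>\<^sup>+s\<in>{x<..}. ennreal (h s) * (\<integral>\<^sup>+u\<in>{u\<in>{0<..}. G s < u}. w u \<partial>lborel) \<partial>lborel)"
    proof (intro nn_integral_mono)
      fix s
      have "ennreal (p * G s powr (p - 1) * h s) = ennreal (h s) * ennreal (p * G s powr (p - 1))"
        using h[of s] p by (simp add: ennreal_mult[symmetric] mult_ac)
      also have "\<dots> \<le> ennreal (h s) * (\<integral>\<^sup>+u\<in>{u\<in>{0<..}. G s < u}. w u \<partial>lborel)"
        by (intro mult_left_mono inner) simp
      finally show "ennreal (p * G s powr (p - 1) * h s) * indicator {x<..} s
          \<le> ennreal (h s) * (\<integral>\<^sup>+u\<in>{u\<in>{0<..}. G s < u}. w u \<partial>lborel) * indicator {x<..} s"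
        by (intro mult_right_mono) simp_all
    qed
    also have "\<dots> = (\<integral>\<^sup>+u\<in>{0<..}. w u * (\<integral>\<^sup>+s\<in>{s\<in>{x<..}. G s < u}. ennreal (h s) \<partial>lborel) \<partial>lborel)"
      unfolding w_def by (rule nn_integral_swap_pred[symmetric]) measurable
    also have "\<dots> \<le> (\<integral>\<^sup>+u\<in>{0<..}. w u * ennreal (min u (G x)) \<partial>lborel)"
      using tail_integral_sublevel_le[OF _ fin] unfolding G_def
      by (intro nn_integral_mono) (auto split: split_indicator intro!: mult_left_mono)
    also have "\<dots> = ennreal (G x powr p)"
      unfolding nn_integral_layer_powr_lt_1[OF p(1) 3, symmetric] w_def using 3 p
      by (intro nn_integral_cong) (auto split: split_indicator simp: ennreal_mult')
    finally show ?thesis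
      unfolding G_def .
  qed
qed

section \<open>Pointwise Young inequalities\<close>

lemma weighted_AM_GM_ln:
  fixes P Q X \<theta> :: real
  assumes "0 < P" "0 < Q" "0 < X" "0 \<le> \<theta>" "\<theta> \<le> 1"
    and "ln X = \<theta> * ln P + (1 - \<theta>) * ln Q"
  shows "X \<le> \<theta> * P + (1 - \<theta>) * Q"
proof -
  have "X = exp (\<theta> * ln P + (1 - \<theta>) * ln Q)"
    using assms by (metis exp_ln)
  also have "\<dots> = P powr \<theta> * Q powr (1 - \<theta>)"
    using assms by (simp add: powr_def exp_add mult.commute)
  also have "\<dots> \<le> \<theta> * P + (1 - \<theta>) * Q"
    using assms by (intro Youngs_inequality_0) auto
  finally show ?thesis .
qed

lemma hardy_Young:
  fixes \<alpha> p x L G y :: real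
  assumes "0 < \<alpha>" "1 < p" "0 < x" "0 < L" "0 \<le> G" "0 \<le> y"
  shows "p * (L powr (\<alpha> * p) * G powr (p - 1) * y)
           \<le> (p - 1) * (\<alpha> * (L powr (\<alpha> * p - 1) / x) * G powr p)
             + \<alpha> powr (1 - p) * (x powr p * L powr ((1 + \<alpha>) * p - 1) * y powr p / x)"
proof (cases "G = 0 \<or> y = 0")
  case False
  let ?X = "L powr (\<alpha> * p) * G powr (p - 1) * y"
  let ?P = "\<alpha> * (L powr (\<alpha> * p - 1) / x) * G powr p"
  let ?Q = "\<alpha> powr (1 - p) * (x powr p * L powr ((1 + \<alpha>) * p - 1) * y powr p / x)"
  have "0 < G" "0 < y"
    using False assms by auto
  then have "?X \<le> (p - 1) / p * ?P + (1 - (p - 1) / p) * ?Q"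
    using assms by (intro weighted_AM_GM_ln) (auto simp: ln_mult ln_div ln_powr field_simps)
  then show ?thesis
    using assms by (simp add: field_simps)
qed (use assms in auto)

lemma hardy_Young_reverse:
  fixes \<alpha> p x L G y :: real
  assumes "0 < \<alpha>" "0 < p" "p \<le> 1" "0 < x" "0 < L" "0 < G" "0 \<le> y"
  shows "x powr p * L powr ((1 + \<alpha>) * p - 1) * y powr p / x
           \<le> p * (\<alpha> powr (p - 1) * (L powr (\<alpha> * p) * G powr (p - 1) * y))
             + (1 - p) * (\<alpha> powr p * (L powr (\<alpha> * p - 1) / x) * G powr p)"
proof (cases "y = 0")
  case False
  then have "0 < y"
    using assms by auto
  then show ?thesis
    using assms by (intro weighted_AM_GM_ln) (auto simp: ln_mult ln_div ln_powr field_simps)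
qed (use assms in auto)

lemma ln_mult_exp_div_ge_1:
  fixes l x :: real
  assumes "0 < l" "l \<le> x"
  shows "1 \<le> ln (x * exp 1 / l)"
  using assms by (subst ln_ge_iff) (auto simp: field_simps)

lemma ln_mult_exp_div_gt_1:
  fixes l x :: real
  assumes "0 < l" "l < x"
  shows "1 < ln (x * exp 1 / l)"
proof -
  have "ln (exp 1) < ln (x * exp 1 / l)"
    using assms by (subst ln_less_cancel_iff) (auto simp: field_simps)
  then show ?thesis
    by simp
qed

lemma DERIV_ln_mult_exp_div_powr:
  fixes l x \<gamma> :: real
  assumes "0 < l" "l < x"
  shows "DERIV (\<lambda>x. ln (x * exp 1 / l) powr \<gamma>) x :> \<gamma> * ln (x * exp 1 / l) powr (\<gamma> - 1) / x"
proof -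
  have "DERIV (\<lambda>x. ln (x * exp 1 / l)) x :> 1 / x"
    using assms by (auto intro!: derivative_eq_intros)
  from DERIV_fun_powr[OF this, of \<gamma>] show ?thesis
    using ln_mult_exp_div_gt_1[OF assms] by simp
qed

lemma nn_integral_log_weight_Ioo:
  fixes l y \<gamma> :: real
  assumes "0 < l" "l < y" "0 < \<gamma>"
  shows "(\<integral>\<^sup>+x\<in>{l<..<y}. ennreal (\<gamma> * ln (x * exp 1 / l) powr (\<gamma> - 1) / x) \<partial>lborel)
       = ennreal (ln (y * exp 1 / l) powr \<gamma> - 1)"
proof -
  let ?F = "\<lambda>x. ln (x * exp 1 / l) powr \<gamma>"
  have "(?F \<longlongrightarrow> ?F z) (at z)" if "l \<le> z" for z
    using assms that ln_mult_exp_div_ge_1[of l z] by (intro tendsto_intros) auto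
  from this[of l] this[of y] have start: "(?F \<longlongrightarrow> ?F l) (at_right l)" and stop: "(?F \<longlongrightarrow> ?F y) (at_left y)"
    using assms by (auto simp add: filterlim_at_split simp del: ln_mult times_divide_eq_right)
  have deriv: "DERIV ?F x :> \<gamma> * ln (x * exp 1 / l) powr (\<gamma> - 1) / x" if "l < x" "x < y" for x
    using assms that by (intro DERIV_ln_mult_exp_div_powr) auto
  have cont: "isCont (\<lambda>x. \<gamma> * ln (x * exp 1 / l) powr (\<gamma> - 1) / x) x" if "l < x" "x < y" for x
    using assms that ln_mult_exp_div_gt_1[of l x] by (intro continuous_intros) auto
  have nonneg: "0 \<le> \<gamma> * ln (x * exp 1 / l) powr (\<gamma> - 1) / x" if "l < x" "x < y" for x
    using assms that by simp
  from nn_integral_FTC_Ioo[OF \<open>l < y\<close> deriv cont nonneg start stop] show ?thesis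
    using assms by simp
qed

lemma nn_integral_log_weight_Ioi:
  fixes l x\<^sub>0 \<gamma> c :: real
  assumes "0 < l" "l \<le> x\<^sub>0" "\<gamma> < 0" "0 \<le> c"
  shows "(\<integral>\<^sup>+y\<in>{x\<^sub>0<..}. ennreal (c * ln (y * exp 1 / l) powr (\<gamma> - 1) / y) \<partial>lborel)
       = ennreal (c * ln (x\<^sub>0 * exp 1 / l) powr \<gamma> / (- \<gamma>))"
proof -
  let ?F = "\<lambda>y. c * ln (y * exp 1 / l) powr \<gamma> / \<gamma>"
  have "filterlim (\<lambda>y. exp 1 / l * y) at_top at_top"
    using assms(1) by (intro filterlim_tendsto_pos_mult_at_top[OF tendsto_const _ filterlim_ident]) auto
  then have "filterlim (\<lambda>y. ln (y * exp 1 / l)) at_top at_top"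
    by (intro filterlim_compose[OF ln_at_top]) (simp add: mult.commute)
  from tendsto_neg_powr[OF \<open>\<gamma> < 0\<close> this]
  have "(?F \<longlongrightarrow> c * 0 / \<gamma>) at_top"
    by (intro tendsto_divide tendsto_mult tendsto_const) (use assms in auto)
  then have top: "(?F \<longlongrightarrow> 0) at_top"
    by simp
  have deriv: "DERIV ?F y :> c * ln (y * exp 1 / l) powr (\<gamma> - 1) / y" if "x\<^sub>0 < y" for y
  proof -
    have "DERIV (\<lambda>y. ln (y * exp 1 / l) powr \<gamma>) y :> \<gamma> * ln (y * exp 1 / l) powr (\<gamma> - 1) / y"
      using that assms by (intro DERIV_ln_mult_exp_div_powr) auto
    from DERIV_cdivide[OF DERIV_cmult[OF this, of c], of \<gamma>] show ?thesis
      using assms by simp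
  qed
  have "(?F \<longlongrightarrow> ?F x\<^sub>0) (at x\<^sub>0)"
    using assms ln_mult_exp_div_ge_1[of l x\<^sub>0] by (intro tendsto_intros) auto
  then have start: "(?F \<longlongrightarrow> ?F x\<^sub>0) (at_right x\<^sub>0)"
    by (simp add: filterlim_at_split)
  have cont: "isCont (\<lambda>y. c * ln (y * exp 1 / l) powr (\<gamma> - 1) / y) y" if "x\<^sub>0 < y" for y
    using assms that ln_mult_exp_div_gt_1[of l y] by (intro continuous_intros) auto
  have nonneg: "0 \<le> c * ln (y * exp 1 / l) powr (\<gamma> - 1) / y" if "x\<^sub>0 < y" for y
    using assms that by simp
  from nn_integral_FTC_Ioi[OF deriv cont nonneg start top] show ?thesis
    by (simp only: diff_0 minus_divide_right)
qed


lemma nn_integral_log_weight_by_parts: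
  fixes \<Phi> :: "real \<Rightarrow> ennreal" and l \<gamma> :: real
  assumes [measurable]: "\<Phi> \<in> borel_measurable borel" and "0 < l" "0 < \<gamma>"
  shows "(\<integral>\<^sup>+s\<in>{l<..}. \<Phi> s * ennreal (ln (s * exp 1 / l) powr \<gamma>) \<partial>lborel)
       = (\<integral>\<^sup>+s\<in>{l<..}. \<Phi> s \<partial>lborel)
         + (\<integral>\<^sup>+x\<in>{l<..}. ennreal (\<gamma> * ln (x * exp 1 / l) powr (\<gamma> - 1) / x)
              * (\<integral>\<^sup>+s\<in>{x<..}. \<Phi> s \<partial>lborel) \<partial>lborel)"
proof -
  define w where "w x = ennreal (\<gamma> * ln (x * exp 1 / l) powr (\<gamma> - 1) / x)" for x
  have "(\<integral>\<^sup>+x\<in>{l<..}. w x * (\<integral>\<^sup>+s\<in>{x<..}. \<Phi> s \<partial>lborel) \<partial>lborel)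
      = (\<integral>\<^sup>+x\<in>{l<..}. w x * (\<integral>\<^sup>+s\<in>{s\<in>{l<..}. x < s}. \<Phi> s \<partial>lborel) \<partial>lborel)"
  proof (intro nn_integral_cong)
    fix x
    have "l < x \<Longrightarrow> {s\<in>{l<..}. x < s} = {x<..}"
      by auto
    then show "w x * (\<integral>\<^sup>+s\<in>{x<..}. \<Phi> s \<partial>lborel) * indicator {l<..} x
        = w x * (\<integral>\<^sup>+s\<in>{s\<in>{l<..}. x < s}. \<Phi> s \<partial>lborel) * indicator {l<..} x"
      by (cases "l < x") simp_all
  qed
  also have "\<dots> = (\<integral>\<^sup>+s\<in>{l<..}. \<Phi> s * (\<integral>\<^sup>+x\<in>{x\<in>{l<..}. x < s}. w x \<partial>lborel) \<partial>lborel)"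
    unfolding w_def by (rule nn_integral_swap_pred) measurable
  also have "\<dots> = (\<integral>\<^sup>+s\<in>{l<..}. \<Phi> s * ennreal (ln (s * exp 1 / l) powr \<gamma> - 1) \<partial>lborel)"
  proof (intro nn_integral_cong)
    fix s
    have "{x\<in>{l<..}. x < s} = {l<..<s}"
      by auto
    then show "\<Phi> s * (\<integral>\<^sup>+x\<in>{x\<in>{l<..}. x < s}. w x \<partial>lborel) * indicator {l<..} s
        = \<Phi> s * ennreal (ln (s * exp 1 / l) powr \<gamma> - 1) * indicator {l<..} s"
      using nn_integral_log_weight_Ioo[OF \<open>0 < l\<close> _ \<open>0 < \<gamma>\<close>, of s]
      unfolding w_def by (auto split: split_indicator)
  qed
  finally have "(\<integral>\<^sup>+s\<in>{l<..}. \<Phi> s \<partial>lborel)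
        + (\<integral>\<^sup>+x\<in>{l<..}. w x * (\<integral>\<^sup>+s\<in>{x<..}. \<Phi> s \<partial>lborel) \<partial>lborel)
      = (\<integral>\<^sup>+s\<in>{l<..}. \<Phi> s * (1 + ennreal (ln (s * exp 1 / l) powr \<gamma> - 1)) \<partial>lborel)"
    by (simp add: nn_integral_add[symmetric] distrib_left distrib_right)
  also have "\<dots> = (\<integral>\<^sup>+s\<in>{l<..}. \<Phi> s * ennreal (ln (s * exp 1 / l) powr \<gamma>) \<partial>lborel)"
  proof (intro nn_integral_cong)
    fix s
    have "l < s \<Longrightarrow> 1 \<le> ln (s * exp 1 / l) powr \<gamma>"
      using ln_mult_exp_div_ge_1[OF \<open>0 < l\<close>] \<open>0 < \<gamma>\<close> by (intro ge_one_powr_ge_zero) auto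
    then have "l < s \<Longrightarrow> 1 + ennreal (ln (s * exp 1 / l) powr \<gamma> - 1) = ennreal (ln (s * exp 1 / l) powr \<gamma>)"
      using ennreal_plus[of 1 "ln (s * exp 1 / l) powr \<gamma> - 1"] by simp
    then show "\<Phi> s * (1 + ennreal (ln (s * exp 1 / l) powr \<gamma> - 1)) * indicator {l<..} s
        = \<Phi> s * ennreal (ln (s * exp 1 / l) powr \<gamma>) * indicator {l<..} s"
      by (auto split: split_indicator)
  qed
  finally show ?thesis
    unfolding w_def by simp
qed

lemma epowr_ennreal: "0 \<le> a \<Longrightarrow> epowr (ennreal a) p = ennreal (a powr p)"
  by (simp add: epowr_def)

lemma borel_measurable_epowr[measurable]:
  assumes [measurable]: "g \<in> borel_measurable M"
  shows "(\<lambda>x. epowr (g x) p) \<in> borel_measurable M"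
  unfolding epowr_def by measurable

lemma ennreal_le_lin_comb:
  fixes z a b X Y :: real
  assumes "0 \<le> a" "0 \<le> b" "0 \<le> X" "0 \<le> Y" "z \<le> a * X + b * Y"
  shows "ennreal z \<le> ennreal a * ennreal X + ennreal b * ennreal Y"
  using assms by (simp add: ennreal_leI ennreal_mult[symmetric] ennreal_plus[symmetric] del: ennreal_plus)

lemma set_nn_integral_lin_comb:
  fixes f g :: "'a \<Rightarrow> ennreal"
  assumes [measurable]: "f \<in> borel_measurable M" "g \<in> borel_measurable M" "S \<in> sets M"
  shows "(\<integral>\<^sup>+x\<in>S. a * f x + b * g x \<partial>M) = a * (\<integral>\<^sup>+x\<in>S. f x \<partial>M) + b * (\<integral>\<^sup>+x\<in>S. g x \<partial>M)"
  by (simp add: distrib_right nn_integral_add nn_integral_cmult[symmetric] mult.assoc)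

definition hardy_tail_term :: "real \<Rightarrow> real \<Rightarrow> real \<Rightarrow> (real \<Rightarrow> real) \<Rightarrow> ennreal" where
  "hardy_tail_term \<alpha> p l h = (\<integral>\<^sup>+x\<in>{l<..}. ennreal (ln (x * exp 1 / l) powr (\<alpha> * p - 1) / x)
      * epowr (tail_integral h x) p \<partial>lborel)"

text \<open>Since \<open>p G\<^sup>p\<^sup>-\<^sup>1 h = -(G\<^sup>p)'\<close>, this is the integral of \<open>L\<^sup>\<alpha>\<^sup>p\<close> against \<open>-d(G\<^sup>p)\<close>.\<close>

definition hardy_mixed_term :: "real \<Rightarrow> real \<Rightarrow> real \<Rightarrow> (real \<Rightarrow> real) \<Rightarrow> ennreal" where
  "hardy_mixed_term \<alpha> p l h = (\<integral>\<^sup>+x\<in>{l<..}. ennreal (p * ln (x * exp 1 / l) powr (\<alpha> * p)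
      * enn2real (tail_integral h x) powr (p - 1) * h x) \<partial>lborel)"

lemma hardy_lhs_eq:
  assumes [measurable]: "h \<in> borel_measurable borel"
  shows "hardy_lhs c\<^sub>1 c\<^sub>2 \<alpha> p l h
       = ennreal c\<^sub>1 * epowr (tail_integral h l) p + ennreal c\<^sub>2 * hardy_tail_term \<alpha> p l h"
proof -
  have tail: "(\<integral>\<^sup>+y\<in>{x<..}. ennreal (h y) \<partial>lebesgue) = tail_integral h x" for x
    unfolding tail_integral_def by (rule nn_integral_completion) measurable
  show ?thesis
    unfolding hardy_lhs_def hardy_tail_term_def tail
    by (subst nn_integral_completion) (auto simp del: times_divide_eq_left)
qed

lemma hardy_rhs_eq:
  assumes [measurable]: "h \<in> borel_measurable borel"
  shows "hardy_rhs \<alpha> p l h = (\<integral>\<^sup>+x\<in>{l<..}. ennreal (x powr p * ln (x * exp 1 / l) powr ((1 + \<alpha>) * p - 1)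
           * h x powr p / x) \<partial>lborel)"
  unfolding hardy_rhs_def by (rule nn_integral_completion) measurable

lemma hardy_rhs_mono:
  assumes "\<And>x. l < x \<Longrightarrow> 0 \<le> g x" "\<And>x. l < x \<Longrightarrow> g x \<le> h x" "0 < p" "0 \<le> l"
  shows "hardy_rhs \<alpha> p l g \<le> hardy_rhs \<alpha> p l h"
  unfolding hardy_rhs_def using assms
  by (intro nn_integral_mono)
     (auto split: split_indicator intro!: ennreal_leI divide_right_mono mult_left_mono powr_mono2)

lemma hardy_tail_term_finite:
  assumes fin: "tail_integral h l < \<infinity>"
  shows "hardy_tail_term \<alpha> p l h = (\<integral>\<^sup>+x\<in>{l<..}. ennreal (ln (x * exp 1 / l) powr (\<alpha> * p - 1) / x)
           * ennreal (enn2real (tail_integral h x) powr p) \<partial>lborel)"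
  unfolding hardy_tail_term_def using tail_integral_finite(1)[OF fin]
  by (intro nn_integral_cong) (auto split: split_indicator simp: epowr_ennreal,
      metis enn2real_nonneg epowr_ennreal less_imp_le)

lemma hardy_mixed_term_by_parts:
  assumes [measurable]: "h \<in> borel_measurable borel"
    and "0 < \<alpha>" "0 < p" "0 < l"
  shows "hardy_mixed_term \<alpha> p l h
       = (\<integral>\<^sup>+s\<in>{l<..}. ennreal (p * enn2real (tail_integral h s) powr (p - 1) * h s) \<partial>lborel)
         + (\<integral>\<^sup>+x\<in>{l<..}. ennreal (\<alpha> * p * ln (x * exp 1 / l) powr (\<alpha> * p - 1) / x)
              * (\<integral>\<^sup>+s\<in>{x<..}. ennreal (p * enn2real (tail_integral h s) powr (p - 1) * h s) \<partial>lborel)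
           \<partial>lborel)"
proof -
  have "hardy_mixed_term \<alpha> p l h
      = (\<integral>\<^sup>+s\<in>{l<..}. ennreal (p * enn2real (tail_integral h s) powr (p - 1) * h s)
           * ennreal (ln (s * exp 1 / l) powr (\<alpha> * p)) \<partial>lborel)"
    unfolding hardy_mixed_term_def
    by (intro nn_integral_cong) (simp add: ennreal_mult'[symmetric] ennreal_mult''[symmetric] mult_ac)
  then show ?thesis
    using nn_integral_log_weight_by_parts[of "\<lambda>s. ennreal (p * enn2real (tail_integral h s) powr (p - 1) * h s)"
        l "\<alpha> * p"] assms
    by simp
qed

lemma hardy_tail_term_weighted:
  assumes [measurable]: "h \<in> borel_measurable borel"
    and fin: "tail_integral h l < \<infinity>" and "0 < \<alpha>" "0 < p" "0 < l"
  shows "ennreal (p * \<alpha>) * hardy_tail_term \<alpha> p l h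
       = (\<integral>\<^sup>+x\<in>{l<..}. ennreal (\<alpha> * p * ln (x * exp 1 / l) powr (\<alpha> * p - 1) / x)
           * ennreal (enn2real (tail_integral h x) powr p) \<partial>lborel)"
proof -
  have "ennreal (p * \<alpha>) * ennreal (ln (x * exp 1 / l) powr (\<alpha> * p - 1) / x)
      = ennreal (\<alpha> * p * ln (x * exp 1 / l) powr (\<alpha> * p - 1) / x)" if "l < x" for x
    using assms that by (subst ennreal_mult[symmetric]) (auto simp: mult_ac)
  then show ?thesis
    unfolding hardy_tail_term_finite[OF fin]
    by (subst nn_integral_cmult[symmetric])
       (auto intro!: nn_integral_cong split: split_indicator simp: mult.assoc[symmetric])
qed

lemma hardy_mixed_term_ge:
  assumes [measurable]: "h \<in> borel_measurable borel" and h: "\<And>x. 0 \<le> h x"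
    and fin: "tail_integral h l < \<infinity>" and "0 < \<alpha>" "1 < p" "0 < l"
  shows "ennreal (enn2real (tail_integral h l) powr p) + ennreal (p * \<alpha>) * hardy_tail_term \<alpha> p l h
           \<le> hardy_mixed_term \<alpha> p l h"
proof -
  have "tail_integral h x < \<infinity>" if "l \<le> x" for x
    using tail_integral_antimono[OF that, of h] fin by (simp add: le_less_trans)
  note layer = tail_integral_powr_le[OF _ h this \<open>1 < p\<close>]
  have "ennreal (p * \<alpha>) * hardy_tail_term \<alpha> p l h
      \<le> (\<integral>\<^sup>+x\<in>{l<..}. ennreal (\<alpha> * p * ln (x * exp 1 / l) powr (\<alpha> * p - 1) / x)
           * (\<integral>\<^sup>+s\<in>{x<..}. ennreal (p * enn2real (tail_integral h s) powr (p - 1) * h s) \<partial>lborel)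
         \<partial>lborel)"
    using assms by (subst hardy_tail_term_weighted)
      (auto intro!: nn_integral_mono mult_left_mono layer split: split_indicator)
  then show ?thesis
    using assms by (subst hardy_mixed_term_by_parts) (auto intro!: add_mono layer)
qed

lemma hardy_mixed_term_le:
  assumes [measurable]: "h \<in> borel_measurable borel" and h: "\<And>x. 0 \<le> h x"
    and fin: "tail_integral h l < \<infinity>" and "0 < \<alpha>" "0 < p" "p \<le> 1" "0 < l"
  shows "hardy_mixed_term \<alpha> p l h
           \<le> ennreal (enn2real (tail_integral h l) powr p) + ennreal (p * \<alpha>) * hardy_tail_term \<alpha> p l h"
proof -
  have "tail_integral h x < \<infinity>" if "l \<le> x" for x
    using tail_integral_antimono[OF that, of h] fin by (simp add: le_less_trans)
  note layer = tail_integral_powr_ge[OF _ h this \<open>0 < p\<close> \<open>p \<le> 1\<close>]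
  have "(\<integral>\<^sup>+x\<in>{l<..}. ennreal (\<alpha> * p * ln (x * exp 1 / l) powr (\<alpha> * p - 1) / x)
           * (\<integral>\<^sup>+s\<in>{x<..}. ennreal (p * enn2real (tail_integral h s) powr (p - 1) * h s) \<partial>lborel)
         \<partial>lborel)
      \<le> ennreal (p * \<alpha>) * hardy_tail_term \<alpha> p l h"
    using assms by (subst hardy_tail_term_weighted)
      (auto intro!: nn_integral_mono mult_left_mono layer split: split_indicator)
  then show ?thesis
    using assms by (subst hardy_mixed_term_by_parts) (auto intro!: add_mono layer)
qed

lemma hardy_mixed_term_le_Young:
  assumes [measurable]: "h \<in> borel_measurable borel" and h: "\<And>x. 0 \<le> h x"
    and fin: "tail_integral h l < \<infinity>" and "0 < \<alpha>" "1 < p" "0 < l"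
  shows "hardy_mixed_term \<alpha> p l h
           \<le> ennreal ((p - 1) * \<alpha>) * hardy_tail_term \<alpha> p l h + ennreal (\<alpha> powr (1 - p)) * hardy_rhs \<alpha> p l h"
proof -
  define G where "G x = enn2real (tail_integral h x)" for x
  define L where "L x = ln (x * exp 1 / l)" for x
  have "ennreal (p * L x powr (\<alpha> * p) * G x powr (p - 1) * h x)
      \<le> ennreal ((p - 1) * \<alpha>) * (ennreal (L x powr (\<alpha> * p - 1) / x) * ennreal (G x powr p))
        + ennreal (\<alpha> powr (1 - p)) * ennreal (x powr p * L x powr ((1 + \<alpha>) * p - 1) * h x powr p / x)"
    if "l < x" for x
  proof -
    have "0 < x" "0 < L x"
      using assms that ln_mult_exp_div_gt_1[of l x] unfolding L_def by linarith+
    then have "p * L x powr (\<alpha> * p) * G x powr (p - 1) * h x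
        \<le> ((p - 1) * \<alpha>) * (L x powr (\<alpha> * p - 1) / x * G x powr p)
          + \<alpha> powr (1 - p) * (x powr p * L x powr ((1 + \<alpha>) * p - 1) * h x powr p / x)"
      using hardy_Young[of \<alpha> p x "L x" "G x" "h x"] assms unfolding G_def by (simp add: mult_ac)
    then show ?thesis
      using assms \<open>0 < x\<close> by (subst ennreal_mult[symmetric]) (auto intro!: ennreal_le_lin_comb)
  qed
  then have "hardy_mixed_term \<alpha> p l h
      \<le> (\<integral>\<^sup>+x\<in>{l<..}. ennreal ((p - 1) * \<alpha>) * (ennreal (L x powr (\<alpha> * p - 1) / x) * ennreal (G x powr p))
          + ennreal (\<alpha> powr (1 - p)) * ennreal (x powr p * L x powr ((1 + \<alpha>) * p - 1) * h x powr p / x)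
         \<partial>lborel)"
    unfolding hardy_mixed_term_def G_def L_def
    by (intro nn_integral_mono) (auto split: split_indicator)
  also have "\<dots> = ennreal ((p - 1) * \<alpha>) * hardy_tail_term \<alpha> p l h + ennreal (\<alpha> powr (1 - p)) * hardy_rhs \<alpha> p l h"
    unfolding hardy_tail_term_finite[OF fin] hardy_rhs_eq[OF assms(1)] G_def L_def
    by (rule set_nn_integral_lin_comb) measurable
  finally show ?thesis .
qed

text \<open>Where \<open>G\<close> vanishes, \<open>G\<^sup>p\<^sup>-\<^sup>1\<close> takes the junk value \<open>0 powr (p - 1) = 0\<close>, so the reverse Young
  inequality needs \<open>h = 0\<close> there.\<close>

lemma AE_tail_integral_eq_0_imp:
  assumes [measurable]: "h \<in> borel_measurable borel" and h: "\<And>x. 0 \<le> h x"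
  shows "AE x in lborel. l < x \<longrightarrow> tail_integral h x = 0 \<longrightarrow> h x = 0"
proof -
  define T where "T = {x. l < x \<and> tail_integral h x = 0}"
  have [measurable]: "T \<in> sets borel"
    unfolding T_def by measurable
  have "(\<integral>\<^sup>+y\<in>T. ennreal (h y) \<partial>lborel) \<le> 0"
  proof (rule set_nn_integral_le_tail_bound)
    show "bdd_below T"
      unfolding T_def by (auto intro!: bdd_belowI[of _ l])
  qed (auto simp: T_def)
  then have "(\<integral>\<^sup>+y. ennreal (h y) * indicator T y \<partial>lborel) = 0"
    by simp
  then have "AE y in lborel. ennreal (h y) * indicator T y = 0"
    by (subst (asm) nn_integral_0_iff_AE) auto
  then show ?thesis
    by eventually_elim (use h in \<open>auto simp: T_def split: split_indicator\<close>)
qed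

lemma hardy_rhs_le_Young:
  assumes [measurable]: "h \<in> borel_measurable borel" and h: "\<And>x. 0 \<le> h x"
    and fin: "tail_integral h l < \<infinity>" and "0 < \<alpha>" "0 < p" "p \<le> 1" "0 < l"
  shows "hardy_rhs \<alpha> p l h
           \<le> ennreal (\<alpha> powr (p - 1)) * hardy_mixed_term \<alpha> p l h
             + ennreal ((1 - p) * \<alpha> powr p) * hardy_tail_term \<alpha> p l h"
proof -
  define G where "G x = enn2real (tail_integral h x)" for x
  define L where "L x = ln (x * exp 1 / l)" for x
  have "ennreal (x powr p * L x powr ((1 + \<alpha>) * p - 1) * h x powr p / x)
      \<le> ennreal (\<alpha> powr (p - 1)) * ennreal (p * L x powr (\<alpha> * p) * G x powr (p - 1) * h x)
        + ennreal ((1 - p) * \<alpha> powr p) * (ennreal (L x powr (\<alpha> * p - 1) / x) * ennreal (G x powr p))"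
    if "l < x" and vanish: "tail_integral h x = 0 \<longrightarrow> h x = 0" for x
  proof -
    have "0 < x" "0 < L x"
      using assms that ln_mult_exp_div_gt_1[of l x] unfolding L_def by linarith+
    have "tail_integral h x = ennreal (G x)"
      using tail_integral_finite(1)[OF fin] \<open>l < x\<close> unfolding G_def by simp
    then have "G x = 0 \<longrightarrow> h x = 0"
      using vanish by auto
    moreover have "0 \<le> G x"
      unfolding G_def by simp
    ultimately consider "h x = 0" | "0 < G x"
      by fastforce
    then have "x powr p * L x powr ((1 + \<alpha>) * p - 1) * h x powr p / x
        \<le> \<alpha> powr (p - 1) * (p * L x powr (\<alpha> * p) * G x powr (p - 1) * h x)
          + ((1 - p) * \<alpha> powr p) * (L x powr (\<alpha> * p - 1) / x * G x powr p)"
    proof cases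
      case 2
      then show ?thesis
        using hardy_Young_reverse[of \<alpha> p x "L x" "G x" "h x"] assms \<open>0 < x\<close> \<open>0 < L x\<close>
        by (simp add: mult_ac)
    qed (use assms \<open>0 < x\<close> in \<open>auto simp: G_def\<close>)
    then show ?thesis
      using assms \<open>0 < x\<close> by (subst ennreal_mult[symmetric]) (auto intro!: ennreal_le_lin_comb)
  qed
  then have "hardy_rhs \<alpha> p l h
      \<le> (\<integral>\<^sup>+x\<in>{l<..}. ennreal (\<alpha> powr (p - 1)) * ennreal (p * L x powr (\<alpha> * p) * G x powr (p - 1) * h x)
          + ennreal ((1 - p) * \<alpha> powr p) * (ennreal (L x powr (\<alpha> * p - 1) / x) * ennreal (G x powr p))
         \<partial>lborel)"
    unfolding hardy_rhs_eq[OF assms(1)] L_def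
    by (intro nn_integral_mono_AE, use AE_tail_integral_eq_0_imp[OF assms(1) h, of l] in eventually_elim)
       (auto split: split_indicator)
  also have "\<dots> = ennreal (\<alpha> powr (p - 1)) * hardy_mixed_term \<alpha> p l h
      + ennreal ((1 - p) * \<alpha> powr p) * hardy_tail_term \<alpha> p l h"
    unfolding hardy_tail_term_finite[OF fin] hardy_mixed_term_def G_def L_def
    by (rule set_nn_integral_lin_comb) measurable
  finally show ?thesis .
qed

lemma hardy_inequality_finite:
  assumes [measurable]: "h \<in> borel_measurable borel" and h: "\<And>x. 0 \<le> h x"
    and fin: "tail_integral h l < \<infinity>" and J_fin: "hardy_tail_term \<alpha> p l h < \<infinity>"
    and \<alpha>: "0 < \<alpha>" and p: "1 < p" and "0 < l"
  shows "hardy_lhs (\<alpha> powr (p - 1)) (\<alpha> powr p) \<alpha> p l h \<le> hardy_rhs \<alpha> p l h"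
proof -
  define g where "g = enn2real (tail_integral h l)"
  define J where "J = hardy_tail_term \<alpha> p l h"
  define R where "R = hardy_rhs \<alpha> p l h"
  have "ennreal (p * \<alpha>) = ennreal ((p - 1) * \<alpha>) + ennreal \<alpha>"
    using \<alpha> p by (subst ennreal_plus[symmetric]) (auto simp: algebra_simps)
  then have "ennreal ((p - 1) * \<alpha>) * J + (ennreal (g powr p) + ennreal \<alpha> * J)
      = ennreal (g powr p) + ennreal (p * \<alpha>) * J"
    by (simp add: distrib_right add_ac)
  also have "\<dots> \<le> ennreal ((p - 1) * \<alpha>) * J + ennreal (\<alpha> powr (1 - p)) * R"
    unfolding g_def J_def R_def using assms
    by (intro order_trans[OF hardy_mixed_term_ge hardy_mixed_term_le_Young])
  finally have "ennreal (g powr p) + ennreal \<alpha> * J \<le> ennreal (\<alpha> powr (1 - p)) * R"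
    using J_fin unfolding J_def by (auto simp: ennreal_add_left_cancel_le ennreal_mult_eq_top_iff)
  then have "ennreal (\<alpha> powr (p - 1)) * (ennreal (g powr p) + ennreal \<alpha> * J)
      \<le> ennreal (\<alpha> powr (p - 1)) * (ennreal (\<alpha> powr (1 - p)) * R)"
    by (rule mult_left_mono) simp
  moreover have "ennreal (\<alpha> powr (p - 1)) * (ennreal (\<alpha> powr (1 - p)) * R) = R"
    using \<alpha> by (simp add: mult.assoc[symmetric] ennreal_mult[symmetric] powr_add[symmetric])
  moreover have "ennreal (\<alpha> powr (p - 1)) * (ennreal (g powr p) + ennreal \<alpha> * J)
      = hardy_lhs (\<alpha> powr (p - 1)) (\<alpha> powr p) \<alpha> p l h"
  proof -
    have "ennreal (\<alpha> powr (p - 1)) * ennreal \<alpha> = ennreal (\<alpha> powr p)"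
      using \<alpha> by (simp add: ennreal_mult[symmetric] powr_diff)
    moreover have "epowr (tail_integral h l) p = ennreal (g powr p)"
      using tail_integral_finite(1)[OF fin order_refl] unfolding g_def by (metis enn2real_nonneg epowr_ennreal)
    ultimately show ?thesis
      unfolding hardy_lhs_eq[OF assms(1)] J_def by (simp add: distrib_left mult.assoc[symmetric])
  qed
  ultimately show ?thesis
    unfolding R_def by simp
qed

lemma hardy_inequality_reverse_borel:
  assumes [measurable]: "h \<in> borel_measurable borel" and h: "\<And>x. 0 \<le> h x"
    and \<alpha>: "0 < \<alpha>" and p: "0 < p" "p \<le> 1" and "0 < l"
  shows "hardy_rhs \<alpha> p l h \<le> hardy_lhs (\<alpha> powr (p - 1)) (\<alpha> powr p) \<alpha> p l h"
proof (cases "tail_integral h l < \<infinity>")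
  case True
  define g where "g = enn2real (tail_integral h l)"
  define J where "J = hardy_tail_term \<alpha> p l h"
  have "\<alpha> powr (p - 1) * (p * \<alpha>) = p * \<alpha> powr p"
    using \<alpha> by (simp add: powr_diff)
  then have "ennreal (\<alpha> powr (p - 1)) * ennreal (p * \<alpha>) = ennreal (p * \<alpha> powr p)"
    using \<alpha> p by (simp add: ennreal_mult[symmetric])
  also have "\<dots> + ennreal ((1 - p) * \<alpha> powr p) = ennreal (p * \<alpha> powr p + (1 - p) * \<alpha> powr p)"
    using p by (intro ennreal_plus[symmetric]) auto
  also have "p * \<alpha> powr p + (1 - p) * \<alpha> powr p = \<alpha> powr p"
    by (simp add: algebra_simps)
  finally have coeff_sum: "ennreal (\<alpha> powr (p - 1)) * ennreal (p * \<alpha>) + ennreal ((1 - p) * \<alpha> powr p)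
      = ennreal (\<alpha> powr p)" .
  then have coeff: "ennreal (\<alpha> powr (p - 1)) * (ennreal (g powr p) + ennreal (p * \<alpha>) * J)
      + ennreal ((1 - p) * \<alpha> powr p) * J = ennreal (\<alpha> powr (p - 1)) * ennreal (g powr p) + ennreal (\<alpha> powr p) * J"
    unfolding coeff_sum[symmetric] by (simp add: distrib_left distrib_right mult.assoc add.assoc)
  have "hardy_rhs \<alpha> p l h
      \<le> ennreal (\<alpha> powr (p - 1)) * hardy_mixed_term \<alpha> p l h + ennreal ((1 - p) * \<alpha> powr p) * J"
    unfolding J_def by (rule hardy_rhs_le_Young[OF assms(1) h True \<alpha> p \<open>0 < l\<close>])
  also have "\<dots> \<le> ennreal (\<alpha> powr (p - 1)) * (ennreal (g powr p) + ennreal (p * \<alpha>) * J)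
      + ennreal ((1 - p) * \<alpha> powr p) * J"
    unfolding g_def J_def using assms True
    by (intro add_mono mult_left_mono hardy_mixed_term_le) auto
  also have "\<dots> = hardy_lhs (\<alpha> powr (p - 1)) (\<alpha> powr p) \<alpha> p l h"
  proof -
    have "epowr (tail_integral h l) p = ennreal (g powr p)"
      using tail_integral_finite(1)[OF True order_refl] unfolding g_def by (metis enn2real_nonneg epowr_ennreal)
    then show ?thesis
      unfolding coeff hardy_lhs_eq[OF assms(1)] J_def[symmetric] by simp
  qed
  finally show ?thesis .
next
  case False
  then have "tail_integral h l = \<infinity>"
    by (simp add: less_top[symmetric])
  then show ?thesis
    using \<alpha> by (simp add: hardy_lhs_eq epowr_def ennreal_mult_top)
qed

section \<open>Removing the finiteness assumptions\<close>

lemma epowr_mono: "a \<le> b \<Longrightarrow> 0 < p \<Longrightarrow> epowr a p \<le> epowr b p"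
proof (cases "b = \<infinity>")
  case False
  assume ab: "a \<le> b" and p: "0 < p"
  then have "a \<noteq> \<infinity>" using False by (auto simp: top_unique)
  have "enn2real a \<le> enn2real b" using ab False by (intro enn2real_mono) (auto simp: top.not_eq_extremum)
  then show ?thesis using False \<open>a \<noteq> \<infinity>\<close> p unfolding epowr_def by (auto intro!: ennreal_leI powr_mono2)
qed (simp add: epowr_def)

lemma tendsto_epowr:
  assumes "(a \<longlongrightarrow> ennreal t) F" "0 \<le> t" "0 < p"
  shows "((\<lambda>n. epowr (a n) p) \<longlongrightarrow> ennreal (t powr p)) F"
proof -
  have "\<forall>\<^sub>F n in F. a n < \<infinity>"
    using order_tendstoD(2)[OF assms(1)] by simp
  then have ev: "\<forall>\<^sub>F n in F. ennreal (enn2real (a n) powr p) = epowr (a n) p"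
    by eventually_elim (simp add: epowr_def)
  have "((\<lambda>n. enn2real (a n)) \<longlongrightarrow> t) F"
    using tendsto_enn2real[OF assms(1)] assms(2) by simp
  then have "((\<lambda>n. ennreal (enn2real (a n) powr p)) \<longlongrightarrow> ennreal (t powr p)) F"
    using assms(3) by (intro tendsto_ennrealI tendsto_powr') auto
  from Lim_transform_eventually[OF this ev] show ?thesis .
qed

lemma epowr_SUP:
  fixes a :: "nat \<Rightarrow> ennreal"
  assumes inc: "incseq a" and p: "0 < p"
  shows "epowr (SUP n. a n) p = (SUP n. epowr (a n) p)"
proof (cases "(SUP n. a n) = \<infinity>")
  case True
  have bound: "ennreal M \<le> (SUP n. epowr (a n) p)" if "0 \<le> M" for M
  proof -
    have "ennreal (M powr (1 / p)) < (SUP n. a n)"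
      unfolding True by simp
    then obtain n where n: "ennreal (M powr (1 / p)) < a n"
      by (auto simp: less_SUP_iff)
    have "ennreal M \<le> epowr (a n) p"
    proof (cases "a n")
      case (real t)
      then have "M \<le> t powr p"
        using n powr_mono2[of p "M powr (1 / p)" t] that p by (simp add: powr_powr ennreal_less_iff)
      then show ?thesis
        using real by (simp add: epowr_def ennreal_leI)
    qed (simp add: epowr_def)
    then show ?thesis
      by (rule order_trans) (rule SUP_upper, simp)
  qed
  have "(SUP n. epowr (a n) p) = \<infinity>"
  proof (rule ccontr)
    assume "(SUP n. epowr (a n) p) \<noteq> \<infinity>"
    then obtain s where "(SUP n. epowr (a n) p) = ennreal s" "0 \<le> s"
      by (cases "SUP n. epowr (a n) p") auto
    then show False
      using bound[of "s + 1"] by (simp add: ennreal_le_iff)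
  qed
  moreover have "epowr (SUP n. a n) p = \<infinity>"
    using True by (simp add: epowr_def)
  ultimately show ?thesis
    by (simp only:)
next
  case False
  then obtain t where t: "(SUP n. a n) = ennreal t" "0 \<le> t"
    by (cases "SUP n. a n") auto
  have "(\<lambda>n. epowr (a n) p) \<longlonglongrightarrow> epowr (SUP n. a n) p"
    using tendsto_epowr[OF LIMSEQ_SUP[OF inc, unfolded t(1)] t(2) p] t by (simp add: epowr_ennreal)
  moreover have "(\<lambda>n. epowr (a n) p) \<longlonglongrightarrow> (SUP n. epowr (a n) p)"
    using inc p by (intro LIMSEQ_SUP) (auto simp: incseq_def intro: epowr_mono)
  ultimately show ?thesis
    by (rule LIMSEQ_unique)
qed

text \<open>Truncation makes the tail term finite, so that it can be cancelled in the case \<open>p > 1\<close>.\<close>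

definition truncation :: "(real \<Rightarrow> real) \<Rightarrow> nat \<Rightarrow> real \<Rightarrow> real" where
  "truncation h n x = min (h x) (real n) * indicator {..<real n} x"

lemma borel_measurable_truncation[measurable]:
  assumes [measurable]: "h \<in> borel_measurable borel"
  shows "truncation h n \<in> borel_measurable borel"
  unfolding truncation_def by measurable

lemma truncation_nonneg: "(\<And>x. 0 \<le> h x) \<Longrightarrow> 0 \<le> truncation h n x"
  and truncation_le: "(\<And>x. 0 \<le> h x) \<Longrightarrow> truncation h n x \<le> h x"
  and truncation_mono: "(\<And>x. 0 \<le> h x) \<Longrightarrow> m \<le> n \<Longrightarrow> truncation h m x \<le> truncation h n x"
  by (auto simp: truncation_def split: split_indicator intro: order_trans)

lemma tail_integral_truncation_SUP:
  assumes [measurable]: "h \<in> borel_measurable borel" and h: "\<And>x. 0 \<le> h x"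
  shows "incseq (\<lambda>n. tail_integral (truncation h n) x)"
    and "tail_integral h x = (SUP n. tail_integral (truncation h n) x)"
proof -
  have inc: "incseq (\<lambda>n y. ennreal (truncation h n y) * indicator {x<..} y)"
    using truncation_mono[OF h]
    by (auto simp: incseq_def le_fun_def intro!: mult_right_mono ennreal_leI)
  then show "incseq (\<lambda>n. tail_integral (truncation h n) x)"
    unfolding tail_integral_def incseq_def le_fun_def by (auto intro!: nn_integral_mono)
  have "(SUP n. ennreal (truncation h n y)) = ennreal (h y)" for y
  proof (rule LIMSEQ_unique[OF LIMSEQ_SUP])
    show "incseq (\<lambda>n. ennreal (truncation h n y))"
      using truncation_mono[OF h] by (auto simp: incseq_def intro!: ennreal_leI)
    obtain N :: nat where "max (h y) y < real N"
      using reals_Archimedean2 by blast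
    then have "\<forall>\<^sub>F n in sequentially. ennreal (truncation h n y) = ennreal (h y)"
      by (intro eventually_sequentiallyI[of N]) (auto simp: truncation_def)
    then show "(\<lambda>n. ennreal (truncation h n y)) \<longlonglongrightarrow> ennreal (h y)"
      by (rule tendsto_eventually)
  qed
  then have "tail_integral h x = (\<integral>\<^sup>+y. (SUP n. ennreal (truncation h n y) * indicator {x<..} y) \<partial>lborel)"
    unfolding tail_integral_def by (simp add: SUP_mult_right_ennreal[symmetric])
  also have "\<dots> = (SUP n. tail_integral (truncation h n) x)"
    unfolding tail_integral_def by (rule nn_integral_monotone_convergence_SUP[OF inc]) measurable
  finally show "tail_integral h x = (SUP n. tail_integral (truncation h n) x)" .
qed

lemma tail_integral_truncation_finite:
  assumes h: "\<And>x. 0 \<le> h x"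
  shows "tail_integral (truncation h n) x < \<infinity>"
    and "real n \<le> x \<Longrightarrow> tail_integral (truncation h n) x = 0"
proof -
  have "tail_integral (truncation h n) x \<le> (\<integral>\<^sup>+y\<in>{x<..<max x (real n)}. ennreal (real n) \<partial>lborel)"
    unfolding tail_integral_def using h
    by (intro nn_integral_mono) (auto simp: truncation_def split: split_indicator intro!: ennreal_leI)
  also have "\<dots> < \<infinity>"
    by (simp add: nn_integral_cmult ennreal_mult_less_top)
  finally show "tail_integral (truncation h n) x < \<infinity>" .
  show "tail_integral (truncation h n) x = 0" if "real n \<le> x"
    unfolding tail_integral_def using that
    by (subst nn_integral_cong[where v="\<lambda>_. 0"]) (auto simp: truncation_def split: split_indicator)
qed

lemma hardy_tail_term_truncation_finite:
  assumes [measurable]: "h \<in> borel_measurable borel" and h: "\<And>x. 0 \<le> h x"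
    and "0 < \<alpha>" "0 < p" "0 < l"
  shows "hardy_tail_term \<alpha> p l (truncation h n) < \<infinity>"
proof -
  define C where "C = ln ((l + real n) * exp 1 / l) powr (\<alpha> * p) / l"
  define G where "G x = tail_integral (truncation h n) x" for x
  have "ennreal (ln (x * exp 1 / l) powr (\<alpha> * p - 1) / x) * epowr (G x) p \<le> ennreal C * epowr (G l) p"
    if "l < x" "x < real n" for x
  proof (intro mult_mono)
    have "x * exp 1 / l \<le> (l + real n) * exp 1 / l"
      using assms that by (intro divide_right_mono mult_right_mono) auto
    then have L: "1 < ln (x * exp 1 / l)" "ln (x * exp 1 / l) \<le> ln ((l + real n) * exp 1 / l)"
      using ln_mult_exp_div_gt_1[of l x] assms that by (auto simp del: times_divide_eq_left)
    then have "ln (x * exp 1 / l) powr (\<alpha> * p - 1) \<le> ln ((l + real n) * exp 1 / l) powr (\<alpha> * p)"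
      using assms by (intro order_trans[OF powr_mono powr_mono2]) auto
    then show "ennreal (ln (x * exp 1 / l) powr (\<alpha> * p - 1) / x) \<le> ennreal C"
      unfolding C_def using assms that by (intro ennreal_leI frac_le) auto
    show "epowr (G x) p \<le> epowr (G l) p"
      unfolding G_def using assms that by (intro epowr_mono tail_integral_antimono) auto
  qed auto
  moreover have "G x = 0" if "real n \<le> x" for x
    unfolding G_def using tail_integral_truncation_finite(2)[OF h that] .
  ultimately have "ennreal (ln (x * exp 1 / l) powr (\<alpha> * p - 1) / x) * epowr (G x) p * indicator {l<..} x
      \<le> ennreal C * epowr (G l) p * indicator {l<..<l + real n} x" for x
    using assms epowr_ennreal[of 0 p] by (cases "x < real n") (auto split: split_indicator)
  then have "hardy_tail_term \<alpha> p l (truncation h n)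
      \<le> (\<integral>\<^sup>+x\<in>{l<..<l + real n}. ennreal C * epowr (G l) p \<partial>lborel)"
    unfolding hardy_tail_term_def G_def[symmetric] by (rule nn_integral_mono)
  also have "\<dots> < \<infinity>"
    using tail_integral_truncation_finite(1)[of h n l, OF h] unfolding G_def
    by (simp add: nn_integral_cmult ennreal_mult_less_top epowr_def)
  finally show ?thesis .
qed

lemma epowr_tail_integral_truncation_SUP:
  assumes [measurable]: "h \<in> borel_measurable borel" and h: "\<And>x. 0 \<le> h x" and "0 < p"
  shows "incseq (\<lambda>n. epowr (tail_integral (truncation h n) x) p)"
    and "epowr (tail_integral h x) p = (SUP n. epowr (tail_integral (truncation h n) x) p)"
  using tail_integral_truncation_SUP[OF assms(1) h, of x] assms(3)
  by (auto simp: incseq_def intro: epowr_mono epowr_SUP)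

lemma hardy_tail_term_truncation_SUP:
  assumes [measurable]: "h \<in> borel_measurable borel" and h: "\<And>x. 0 \<le> h x" and "0 < p"
  shows "incseq (\<lambda>n. hardy_tail_term \<alpha> p l (truncation h n))"
    and "hardy_tail_term \<alpha> p l h = (SUP n. hardy_tail_term \<alpha> p l (truncation h n))"
proof -
  define w where "w x = ennreal (ln (x * exp 1 / l) powr (\<alpha> * p - 1) / x)" for x
  note inc = epowr_tail_integral_truncation_SUP(1)[OF assms]
  then show "incseq (\<lambda>n. hardy_tail_term \<alpha> p l (truncation h n))"
    unfolding hardy_tail_term_def incseq_def by (auto intro!: nn_integral_mono mult_right_mono mult_left_mono)
  have "hardy_tail_term \<alpha> p l h
      = (\<integral>\<^sup>+x. (SUP n. w x * epowr (tail_integral (truncation h n) x) p * indicator {l<..} x) \<partial>lborel)"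
    unfolding hardy_tail_term_def w_def[symmetric] epowr_tail_integral_truncation_SUP(2)[OF assms]
    by (simp add: SUP_mult_left_ennreal SUP_mult_right_ennreal)
  also have "\<dots> = (SUP n. hardy_tail_term \<alpha> p l (truncation h n))"
    unfolding hardy_tail_term_def w_def[symmetric] using inc
    by (intro nn_integral_monotone_convergence_SUP)
       (auto simp: incseq_def le_fun_def w_def intro!: mult_right_mono mult_left_mono)
  finally show "hardy_tail_term \<alpha> p l h = (SUP n. hardy_tail_term \<alpha> p l (truncation h n))" .
qed

lemma hardy_inequality_borel:
  assumes [measurable]: "h \<in> borel_measurable borel" and h: "\<And>x. 0 \<le> h x"
    and \<alpha>: "0 < \<alpha>" and p: "1 < p" and "0 < l"
  shows "hardy_lhs (\<alpha> powr (p - 1)) (\<alpha> powr p) \<alpha> p l h \<le> hardy_rhs \<alpha> p l h"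
proof -
  have "0 < p"
    using p by simp
  note G = epowr_tail_integral_truncation_SUP[OF assms(1) h this, of l]
    and J = hardy_tail_term_truncation_SUP[OF assms(1) h this, of \<alpha> l]
  have "hardy_lhs (\<alpha> powr (p - 1)) (\<alpha> powr p) \<alpha> p l h
      = (SUP n. ennreal (\<alpha> powr (p - 1)) * epowr (tail_integral (truncation h n) l) p)
        + (SUP n. ennreal (\<alpha> powr p) * hardy_tail_term \<alpha> p l (truncation h n))"
    unfolding hardy_lhs_eq[OF assms(1)] G(2) J(2) by (simp add: SUP_mult_left_ennreal)
  also have "\<dots> = (SUP n. hardy_lhs (\<alpha> powr (p - 1)) (\<alpha> powr p) \<alpha> p l (truncation h n))"
    unfolding hardy_lhs_eq[OF borel_measurable_truncation[OF assms(1)]] using G(1) J(1)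
    by (intro ennreal_SUP_add[symmetric]) (auto simp: incseq_def intro: mult_left_mono)
  also have "\<dots> \<le> hardy_rhs \<alpha> p l h"
  proof (rule SUP_least)
    fix n
    have "hardy_lhs (\<alpha> powr (p - 1)) (\<alpha> powr p) \<alpha> p l (truncation h n) \<le> hardy_rhs \<alpha> p l (truncation h n)"
      using assms truncation_nonneg[OF h]
      by (intro hardy_inequality_finite tail_integral_truncation_finite hardy_tail_term_truncation_finite) auto
    also have "\<dots> \<le> hardy_rhs \<alpha> p l h"
      using assms truncation_nonneg[OF h] truncation_le[OF h] by (intro hardy_rhs_mono) auto
    finally show "hardy_lhs (\<alpha> powr (p - 1)) (\<alpha> powr p) \<alpha> p l (truncation h n) \<le> hardy_rhs \<alpha> p l h" .
  qed
  finally show ?thesis .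
qed

lemma admissible_borel_version:
  assumes "admissible l f"
  obtains h where "h \<in> borel_measurable borel" "\<And>x. 0 \<le> h x"
    "\<And>c\<^sub>1 c\<^sub>2 \<alpha> p. hardy_lhs c\<^sub>1 c\<^sub>2 \<alpha> p l f = hardy_lhs c\<^sub>1 c\<^sub>2 \<alpha> p l h"
    "\<And>\<alpha> p. hardy_rhs \<alpha> p l f = hardy_rhs \<alpha> p l h"
proof -
  have "(\<lambda>x. indicator {l<..} x *\<^sub>R f x) \<in> borel_measurable (completion lborel)"
    using assms unfolding admissible_def set_borel_measurable_def by simp
  then obtain g where [measurable]: "g \<in> borel_measurable lborel"
    and ae_lborel: "AE x in lborel. indicator {l<..} x *\<^sub>R f x = g x"
    using completion_ex_borel_measurable_real by blast
  define h where "h x = indicator {l<..} x * max 0 (g x)" for x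
  have ae: "AE x in lebesgue. l < x \<longrightarrow> f x = h x"
    using AE_completion[OF ae_lborel]
    by eventually_elim (use assms in \<open>auto simp: admissible_def h_def\<close>)
  have tail: "(\<integral>\<^sup>+y\<in>{x<..}. ennreal (f y) \<partial>lebesgue) = (\<integral>\<^sup>+y\<in>{x<..}. ennreal (h y) \<partial>lebesgue)"
    if "l \<le> x" for x
    using ae that by (intro nn_integral_cong_AE) (auto split: split_indicator elim!: eventually_mono)
  show ?thesis
  proof
    show "h \<in> borel_measurable borel"
      unfolding h_def by (simp add: measurable_lborel1)
    show "0 \<le> h x" for x
      unfolding h_def by simp
    show "hardy_lhs c\<^sub>1 c\<^sub>2 \<alpha> p l f = hardy_lhs c\<^sub>1 c\<^sub>2 \<alpha> p l h" for c\<^sub>1 c\<^sub>2 \<alpha> p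
    proof -
      have "(\<integral>\<^sup>+x\<in>{l<..}. ennreal (ln (x * exp 1 / l) powr (\<alpha> * p - 1) / x)
              * epowr (\<integral>\<^sup>+y\<in>{x<..}. ennreal (f y) \<partial>lebesgue) p \<partial>lebesgue)
          = (\<integral>\<^sup>+x\<in>{l<..}. ennreal (ln (x * exp 1 / l) powr (\<alpha> * p - 1) / x)
              * epowr (\<integral>\<^sup>+y\<in>{x<..}. ennreal (h y) \<partial>lebesgue) p \<partial>lebesgue)"
        by (intro nn_integral_cong) (auto split: split_indicator simp: tail)
      then show ?thesis
        unfolding hardy_lhs_def tail[OF order_refl] by simp
    qed
    show "hardy_rhs \<alpha> p l f = hardy_rhs \<alpha> p l h" for \<alpha> p
      unfolding hardy_rhs_def using ae
      by (intro nn_integral_cong_AE) (auto split: split_indicator elim!: eventually_mono)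
  qed
qed

lemma hardy_inequality:
  assumes "admissible l f" "0 < \<alpha>" "1 < p" "0 < l"
  shows "hardy_lhs (\<alpha> powr (p - 1)) (\<alpha> powr p) \<alpha> p l f \<le> hardy_rhs \<alpha> p l f"
proof -
  obtain h where "h \<in> borel_measurable borel" "\<And>x. 0 \<le> h x"
    "\<And>c\<^sub>1 c\<^sub>2 \<alpha> p. hardy_lhs c\<^sub>1 c\<^sub>2 \<alpha> p l f = hardy_lhs c\<^sub>1 c\<^sub>2 \<alpha> p l h"
    "\<And>\<alpha> p. hardy_rhs \<alpha> p l f = hardy_rhs \<alpha> p l h"
    using admissible_borel_version[OF assms(1)] by blast
  then show ?thesis
    using hardy_inequality_borel assms by simp
qed

lemma hardy_inequality_reverse:
  assumes "admissible l f" "0 < \<alpha>" "0 < p" "p \<le> 1" "0 < l"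
  shows "hardy_rhs \<alpha> p l f \<le> hardy_lhs (\<alpha> powr (p - 1)) (\<alpha> powr p) \<alpha> p l f"
proof -
  obtain h where "h \<in> borel_measurable borel" "\<And>x. 0 \<le> h x"
    "\<And>c\<^sub>1 c\<^sub>2 \<alpha> p. hardy_lhs c\<^sub>1 c\<^sub>2 \<alpha> p l f = hardy_lhs c\<^sub>1 c\<^sub>2 \<alpha> p l h"
    "\<And>\<alpha> p. hardy_rhs \<alpha> p l f = hardy_rhs \<alpha> p l h"
    using admissible_borel_version[OF assms(1)] by blast
  then show ?thesis
    using hardy_inequality_reverse_borel assms by simp
qed

section \<open>Sharpness of the constants\<close>

definition hardy_extremal :: "real \<Rightarrow> real \<Rightarrow> real \<Rightarrow> real" where
  "hardy_extremal \<beta> l x = \<beta> * ln (x * exp 1 / l) powr (- \<beta> - 1) / x"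

lemma borel_measurable_hardy_extremal[measurable]: "hardy_extremal \<beta> l \<in> borel_measurable borel"
  unfolding hardy_extremal_def by measurable

lemma admissible_hardy_extremal:
  assumes "0 < l" "0 < \<beta>"
  shows "admissible l (hardy_extremal \<beta> l)"
  unfolding admissible_def set_borel_measurable_def using assms
  by (auto intro!: measurable_completion simp: measurable_lborel1 hardy_extremal_def)

lemma tail_integral_hardy_extremal:
  assumes "0 < l" "l \<le> x" "0 < \<beta>"
  shows "tail_integral (hardy_extremal \<beta> l) x = ennreal (ln (x * exp 1 / l) powr (- \<beta>))"
  using nn_integral_log_weight_Ioi[of l x "- \<beta>" \<beta>] assms
  unfolding tail_integral_def hardy_extremal_def by simp

lemma hardy_lhs_hardy_extremal:
  assumes "0 < l" "0 < \<alpha>" "0 < p" "\<alpha> < \<beta>" "0 \<le> c\<^sub>1" "0 \<le> c\<^sub>2"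
  shows "hardy_lhs c\<^sub>1 c\<^sub>2 \<alpha> p l (hardy_extremal \<beta> l) = ennreal (c\<^sub>1 + c\<^sub>2 / ((\<beta> - \<alpha>) * p))"
proof -
  have "hardy_tail_term \<alpha> p l (hardy_extremal \<beta> l)
      = (\<integral>\<^sup>+x\<in>{l<..}. ennreal (1 * ln (x * exp 1 / l) powr ((\<alpha> - \<beta>) * p - 1) / x) \<partial>lborel)"
    unfolding hardy_tail_term_def
  proof (intro nn_integral_cong)
    fix x
    have "ln (x * exp 1 / l) powr (\<alpha> * p - 1) * (ln (x * exp 1 / l) powr (- \<beta>)) powr p
        = ln (x * exp 1 / l) powr ((\<alpha> - \<beta>) * p - 1)"
      by (simp add: powr_powr powr_add[symmetric] algebra_simps)
    then show "ennreal (ln (x * exp 1 / l) powr (\<alpha> * p - 1) / x) * epowr (tail_integral (hardy_extremal \<beta> l) x) p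
          * indicator {l<..} x
        = ennreal (1 * ln (x * exp 1 / l) powr ((\<alpha> - \<beta>) * p - 1) / x) * indicator {l<..} x"
      using assms tail_integral_hardy_extremal[of l x \<beta>]
      by (auto split: split_indicator simp: epowr_ennreal ennreal_mult''[symmetric])
  qed
  also have "\<dots> = ennreal (1 / ((\<beta> - \<alpha>) * p))"
    using assms nn_integral_log_weight_Ioi[of l l "(\<alpha> - \<beta>) * p" 1]
    by (simp add: mult_neg_pos algebra_simps)
  finally show ?thesis
    using assms tail_integral_hardy_extremal[of l l \<beta>] epowr_ennreal[of 1 p]
    by (simp add: hardy_lhs_eq epowr_ennreal ennreal_mult[symmetric] ennreal_plus[symmetric]
        del: ennreal_plus)
qed

lemma hardy_rhs_hardy_extremal:
  assumes "0 < l" "0 < \<alpha>" "0 < p" "\<alpha> < \<beta>"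
  shows "hardy_rhs \<alpha> p l (hardy_extremal \<beta> l) = ennreal (\<beta> powr p / ((\<beta> - \<alpha>) * p))"
proof -
  have "hardy_rhs \<alpha> p l (hardy_extremal \<beta> l)
      = (\<integral>\<^sup>+x\<in>{l<..}. ennreal (\<beta> powr p * ln (x * exp 1 / l) powr ((\<alpha> - \<beta>) * p - 1) / x) \<partial>lborel)"
    unfolding hardy_rhs_eq[OF borel_measurable_hardy_extremal]
  proof (intro nn_integral_cong)
    fix x
    define L where "L = ln (x * exp 1 / l)"
    have "l < x \<Longrightarrow> x powr p * L powr ((1 + \<alpha>) * p - 1) * hardy_extremal \<beta> l x powr p / x
        = \<beta> powr p * L powr ((\<alpha> - \<beta>) * p - 1) / x"
      using assms ln_mult_exp_div_gt_1[of l x] unfolding hardy_extremal_def L_def[symmetric]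
      by (simp add: powr_divide powr_mult powr_powr powr_add[symmetric] algebra_simps)
    then show "ennreal (x powr p * ln (x * exp 1 / l) powr ((1 + \<alpha>) * p - 1) * hardy_extremal \<beta> l x powr p / x)
          * indicator {l<..} x
        = ennreal (\<beta> powr p * ln (x * exp 1 / l) powr ((\<alpha> - \<beta>) * p - 1) / x) * indicator {l<..} x"
      unfolding L_def by (auto split: split_indicator)
  qed
  also have "\<dots> = ennreal (\<beta> powr p / ((\<beta> - \<alpha>) * p))"
    using assms nn_integral_log_weight_Ioi[of l l "(\<alpha> - \<beta>) * p" "\<beta> powr p"]
    by (simp add: mult_neg_pos algebra_simps)
  finally show ?thesis .
qed

lemma hardy_extremal_rhs_less:
  assumes "0 < l" "0 < \<alpha>" "0 < p" "0 \<le> c\<^sub>1" "0 \<le> c\<^sub>2"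
    and "\<forall>\<^sub>F \<beta> in at_right \<alpha>. \<beta> powr p < c\<^sub>1 * ((\<beta> - \<alpha>) * p) + c\<^sub>2"
  shows "\<exists>f. admissible l f \<and> hardy_rhs \<alpha> p l f < hardy_lhs c\<^sub>1 c\<^sub>2 \<alpha> p l f"
proof -
  obtain \<beta> where \<beta>: "\<alpha> < \<beta>" "\<beta> powr p < c\<^sub>1 * ((\<beta> - \<alpha>) * p) + c\<^sub>2"
    using eventually_happens'[OF _ eventually_conj[OF eventually_at_right_less assms(6)]] by auto
  moreover have K: "0 < (\<beta> - \<alpha>) * p"
    using assms \<beta> by simp
  ultimately have "\<beta> powr p / ((\<beta> - \<alpha>) * p) < (c\<^sub>1 * ((\<beta> - \<alpha>) * p) + c\<^sub>2) / ((\<beta> - \<alpha>) * p)"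
    by (intro divide_strict_right_mono)
  also have "(c\<^sub>1 * ((\<beta> - \<alpha>) * p) + c\<^sub>2) / ((\<beta> - \<alpha>) * p) = c\<^sub>1 + c\<^sub>2 / ((\<beta> - \<alpha>) * p)"
    using assms \<beta> by (simp add: add_divide_distrib del: mult_diff_mult)
  finally have "\<beta> powr p / ((\<beta> - \<alpha>) * p) < c\<^sub>1 + c\<^sub>2 / ((\<beta> - \<alpha>) * p)" .
  then have "ennreal (\<beta> powr p / ((\<beta> - \<alpha>) * p)) < ennreal (c\<^sub>1 + c\<^sub>2 / ((\<beta> - \<alpha>) * p))"
    using K by (intro ennreal_lessI) (auto intro: le_less_trans[rotated])
  then have "hardy_rhs \<alpha> p l (hardy_extremal \<beta> l) < hardy_lhs c\<^sub>1 c\<^sub>2 \<alpha> p l (hardy_extremal \<beta> l)"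
    using assms \<beta> by (simp only: hardy_lhs_hardy_extremal hardy_rhs_hardy_extremal)
  then show ?thesis
    using admissible_hardy_extremal[of l \<beta>] assms \<beta> by auto
qed

lemma hardy_extremal_lhs_less:
  assumes "0 < l" "0 < \<alpha>" "0 < p" "0 \<le> c\<^sub>1" "0 \<le> c\<^sub>2"
    and "\<forall>\<^sub>F \<beta> in at_right \<alpha>. c\<^sub>1 * ((\<beta> - \<alpha>) * p) + c\<^sub>2 < \<beta> powr p"
  shows "\<exists>f. admissible l f \<and> hardy_lhs c\<^sub>1 c\<^sub>2 \<alpha> p l f < hardy_rhs \<alpha> p l f"
proof -
  obtain \<beta> where \<beta>: "\<alpha> < \<beta>" "c\<^sub>1 * ((\<beta> - \<alpha>) * p) + c\<^sub>2 < \<beta> powr p"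
    using eventually_happens'[OF _ eventually_conj[OF eventually_at_right_less assms(6)]] by auto
  moreover have K: "0 < (\<beta> - \<alpha>) * p"
    using assms \<beta> by simp
  ultimately have "(c\<^sub>1 * ((\<beta> - \<alpha>) * p) + c\<^sub>2) / ((\<beta> - \<alpha>) * p) < \<beta> powr p / ((\<beta> - \<alpha>) * p)"
    by (intro divide_strict_right_mono)
  moreover have "(c\<^sub>1 * ((\<beta> - \<alpha>) * p) + c\<^sub>2) / ((\<beta> - \<alpha>) * p) = c\<^sub>1 + c\<^sub>2 / ((\<beta> - \<alpha>) * p)"
    using assms \<beta> by (simp add: add_divide_distrib del: mult_diff_mult)
  ultimately have "c\<^sub>1 + c\<^sub>2 / ((\<beta> - \<alpha>) * p) < \<beta> powr p / ((\<beta> - \<alpha>) * p)"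
    by simp
  then have "ennreal (c\<^sub>1 + c\<^sub>2 / ((\<beta> - \<alpha>) * p)) < ennreal (\<beta> powr p / ((\<beta> - \<alpha>) * p))"
    using K assms by (intro ennreal_lessI) (auto intro: le_less_trans[rotated])
  then have "hardy_lhs c\<^sub>1 c\<^sub>2 \<alpha> p l (hardy_extremal \<beta> l) < hardy_rhs \<alpha> p l (hardy_extremal \<beta> l)"
    using assms \<beta> by (simp only: hardy_lhs_hardy_extremal hardy_rhs_hardy_extremal)
  then show ?thesis
    using admissible_hardy_extremal[of l \<beta>] assms \<beta> by auto
qed

lemma hardy_lhs_max_0: "hardy_lhs (max 0 c\<^sub>1) (max 0 c\<^sub>2) \<alpha> p l f = hardy_lhs c\<^sub>1 c\<^sub>2 \<alpha> p l f"
  unfolding hardy_lhs_def by (simp add: ennreal_max_0)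

lemma powr_difference_quotient_at_right:
  fixes \<alpha> p :: real
  assumes "0 < \<alpha>"
  shows "((\<lambda>\<beta>. (\<beta> powr p - \<alpha> powr p) / (\<beta> - \<alpha>)) \<longlongrightarrow> p * \<alpha> powr (p - 1)) (at_right \<alpha>)"
  using has_real_derivative_powr[OF assms, of p]
  by (simp add: has_field_derivative_iff filterlim_at_split)

lemma powr_tangent_at_right:
  fixes \<alpha> p c :: real
  assumes "0 < \<alpha>"
  shows "((\<lambda>\<beta>. \<beta> powr p - c * ((\<beta> - \<alpha>) * p)) \<longlongrightarrow> \<alpha> powr p) (at_right \<alpha>)"
proof -
  have "((\<lambda>\<beta>. \<beta> powr p - c * ((\<beta> - \<alpha>) * p)) \<longlongrightarrow> \<alpha> powr p - c * ((\<alpha> - \<alpha>) * p)) (at_right \<alpha>)"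
    using assms by (intro tendsto_intros) auto
  then show ?thesis
    by simp
qed

lemma hardy_first_constant_sharp:
  assumes "0 < l" "0 < \<alpha>" "0 < p" "\<alpha> powr (p - 1) < c"
  shows "\<exists>f. admissible l f \<and> hardy_rhs \<alpha> p l f < hardy_lhs c (\<alpha> powr p) \<alpha> p l f"
proof (rule hardy_extremal_rhs_less)
  have "p * \<alpha> powr (p - 1) < c * p"
    using assms by simp
  from order_tendstoD(2)[OF powr_difference_quotient_at_right[OF \<open>0 < \<alpha>\<close>] this]
  show "\<forall>\<^sub>F \<beta> in at_right \<alpha>. \<beta> powr p < c * ((\<beta> - \<alpha>) * p) + \<alpha> powr p"
    using eventually_at_right_less[of \<alpha>]
    by eventually_elim (simp add: pos_divide_less_eq algebra_simps)
qed (use assms order_trans[OF powr_ge_zero less_imp_le[OF assms(4)]] in auto)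

lemma hardy_first_constant_sharp_reverse:
  assumes "0 < l" "0 < \<alpha>" "0 < p" "c < \<alpha> powr (p - 1)"
  shows "\<exists>f. admissible l f \<and> hardy_lhs c (\<alpha> powr p) \<alpha> p l f < hardy_rhs \<alpha> p l f"
proof -
  have "max 0 c * p < p * \<alpha> powr (p - 1)"
    using assms by simp
  from order_tendstoD(1)[OF powr_difference_quotient_at_right[OF \<open>0 < \<alpha>\<close>] this]
  have "\<forall>\<^sub>F \<beta> in at_right \<alpha>. max 0 c * ((\<beta> - \<alpha>) * p) + \<alpha> powr p < \<beta> powr p"
    using eventually_at_right_less[of \<alpha>]
    by eventually_elim (simp add: pos_less_divide_eq algebra_simps)
  from hardy_extremal_lhs_less[OF assms(1-3) _ _ this] show ?thesis
    using hardy_lhs_max_0[of c "\<alpha> powr p"] by simp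
qed

lemma hardy_second_constant_sharp:
  assumes "0 < l" "0 < \<alpha>" "0 < p" "\<alpha> powr p < c"
  shows "\<exists>f. admissible l f \<and> hardy_rhs \<alpha> p l f < hardy_lhs (\<alpha> powr (p - 1)) c \<alpha> p l f"
proof (rule hardy_extremal_rhs_less)
  from order_tendstoD(2)[OF powr_tangent_at_right[OF \<open>0 < \<alpha>\<close>, where c="\<alpha> powr (p - 1)"] assms(4)]
  show "\<forall>\<^sub>F \<beta> in at_right \<alpha>. \<beta> powr p < \<alpha> powr (p - 1) * ((\<beta> - \<alpha>) * p) + c"
    by eventually_elim simp
qed (use assms order_trans[OF powr_ge_zero less_imp_le[OF assms(4)]] in auto)

lemma hardy_second_constant_sharp_reverse:
  assumes "0 < l" "0 < \<alpha>" "0 < p" "c < \<alpha> powr p"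
  shows "\<exists>f. admissible l f \<and> hardy_lhs (\<alpha> powr (p - 1)) c \<alpha> p l f < hardy_rhs \<alpha> p l f"
proof -
  have "max 0 c < \<alpha> powr p"
    using assms by simp
  from order_tendstoD(1)[OF powr_tangent_at_right[OF \<open>0 < \<alpha>\<close>, where c="\<alpha> powr (p - 1)"] this]
  have "\<forall>\<^sub>F \<beta> in at_right \<alpha>. \<alpha> powr (p - 1) * ((\<beta> - \<alpha>) * p) + max 0 c < \<beta> powr p"
    by eventually_elim (auto simp: max_def)
  from hardy_extremal_lhs_less[OF assms(1-3) _ _ this] show ?thesis
    using hardy_lhs_max_0[of "\<alpha> powr (p - 1)" c] by simp
qed

theorem theorem5p4:
  fixes \<alpha> p l :: real
  assumes "\<alpha> > 0" and "p > 0" and "0 < l"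
  shows "(p > 1 \<longrightarrow>
            (\<forall>f. admissible l f \<longrightarrow>
                 hardy_lhs (\<alpha> powr (p - 1)) (\<alpha> powr p) \<alpha> p l f \<le> hardy_rhs \<alpha> p l f)
          \<and> (\<forall>c. c > \<alpha> powr (p - 1) \<longrightarrow>
                 (\<exists>f. admissible l f \<and> hardy_rhs \<alpha> p l f < hardy_lhs c (\<alpha> powr p) \<alpha> p l f))
          \<and> (\<forall>c. c > \<alpha> powr p \<longrightarrow>
                 (\<exists>f. admissible l f \<and> hardy_rhs \<alpha> p l f < hardy_lhs (\<alpha> powr (p - 1)) c \<alpha> p l f)))
       \<and> (p \<le> 1 \<longrightarrow>
            (\<forall>f. admissible l f \<longrightarrow>
                 hardy_rhs \<alpha> p l f \<le> hardy_lhs (\<alpha> powr (p - 1)) (\<alpha> powr p) \<alpha> p l f)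
          \<and> (\<forall>c. c < \<alpha> powr (p - 1) \<longrightarrow>
                 (\<exists>f. admissible l f \<and> hardy_lhs c (\<alpha> powr p) \<alpha> p l f < hardy_rhs \<alpha> p l f))
          \<and> (\<forall>c. c < \<alpha> powr p \<longrightarrow>
                 (\<exists>f. admissible l f \<and> hardy_lhs (\<alpha> powr (p - 1)) c \<alpha> p l f < hardy_rhs \<alpha> p l f)))"
  using hardy_inequality[OF _ assms(1) _ assms(3)] hardy_inequality_reverse[OF _ assms(1,2) _ assms(3)]
    hardy_first_constant_sharp[OF assms(3,1,2)] hardy_second_constant_sharp[OF assms(3,1,2)]
    hardy_first_constant_sharp_reverse[OF assms(3,1,2)] hardy_second_constant_sharp_reverse[OF assms(3,1,2)]
  by blast

end
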